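(* For all integers $k,t\geq 2$: $\mathrm{sat}^{\star}([t]^n,C_k)\leq 2^{k-2}$, and $\mathrm{sat}^{\star}([t]^n,A_k)=\Theta(n)$ (as $n\to\infty$ with $k,t$ fixed).
   Context: For positive integers $n,t$, $[n]=\{1,\dots,n\}$ and the hypergrid $[t]^n$ is the set of functions $f:[n]\to[t]$, partially ordered by $f\leq g$ iff $f(i)\leq g(i)$ for all $i\in[n]$. An induced copy of a poset $P$ in a family $\mathcal{F}\subseteq[t]^n$ is an injective map $\phi:P\to\mathcal{F}$ such that $\phi(x)\leq\phi(y)$ iff $x\leq_P y$. A family $\mathcal{F}\subseteq[t]^n$ is induced $P$-free if it contains no induced copy of $P$; it is induced $P$-saturated if it is induced $P$-free and for every $f\in[t]^n\setminus\mathcal{F}$ the family $\mathcal{F}\cup\{f\}$ contains an induced copy of $P$. Whenever $P$ embeds as an induced subposet of $[t]^n$, $\mathrm{sat}^{\star}([t]^n,P)$ denotes the minimum size of an induced $P$-saturated family in $[t]^n$. $C_k$ denotes the chain on $k$ elements and $A_k$ the antichain on $k$ elements. *)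

theory Defs
  imports Main "HOL-Library.FuncSet" "HOL-Library.Landau_Symbols"
begin

definition hypergrid :: "nat \<Rightarrow> nat \<Rightarrow> (nat \<Rightarrow> nat) set" where
  "hypergrid n t = {1..n} \<rightarrow>\<^sub>E {1..t}"

definition grid_le :: "nat \<Rightarrow> (nat \<Rightarrow> nat) \<Rightarrow> (nat \<Rightarrow> nat) \<Rightarrow> bool" where
  "grid_le n f g \<longleftrightarrow> (\<forall>i\<in>{1..n}. f i \<le> g i)"

text \<open>A poset P is given by a carrier X and its order relation R.
  An induced copy of (X,R) in F is an injective map phi from X into F with
  phi x \<le> phi y iff R x y.\<close>
definition induced_copy ::
  "'a set \<Rightarrow> ('a \<Rightarrow> 'a \<Rightarrow> bool) \<Rightarrow> nat \<Rightarrow> (nat \<Rightarrow> nat) set \<Rightarrow> ('a \<Rightarrow> (nat \<Rightarrow> nat)) \<Rightarrow> bool" where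
  "induced_copy X R n F \<phi> \<longleftrightarrow> inj_on \<phi> X \<and> \<phi> ` X \<subseteq> F \<and>
     (\<forall>x\<in>X. \<forall>y\<in>X. grid_le n (\<phi> x) (\<phi> y) \<longleftrightarrow> R x y)"

definition induced_free ::
  "'a set \<Rightarrow> ('a \<Rightarrow> 'a \<Rightarrow> bool) \<Rightarrow> nat \<Rightarrow> (nat \<Rightarrow> nat) set \<Rightarrow> bool" where
  "induced_free X R n F \<longleftrightarrow> \<not> (\<exists>\<phi>. induced_copy X R n F \<phi>)"

definition induced_saturated ::
  "'a set \<Rightarrow> ('a \<Rightarrow> 'a \<Rightarrow> bool) \<Rightarrow> nat \<Rightarrow> nat \<Rightarrow> (nat \<Rightarrow> nat) set \<Rightarrow> bool" where
  "induced_saturated X R n t F \<longleftrightarrow> F \<subseteq> hypergrid n t \<and> induced_free X R n F \<and>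
     (\<forall>f \<in> hypergrid n t - F. \<not> induced_free X R n (insert f F))"

definition embeds_in_grid ::
  "'a set \<Rightarrow> ('a \<Rightarrow> 'a \<Rightarrow> bool) \<Rightarrow> nat \<Rightarrow> nat \<Rightarrow> bool" where
  "embeds_in_grid X R n t \<longleftrightarrow> (\<exists>\<phi>. induced_copy X R n (hypergrid n t) \<phi>)"

text \<open>sat*([t]^n, P): minimum size of an induced P-saturated family (meaningful when P embeds).\<close>
definition sat_star ::
  "'a set \<Rightarrow> ('a \<Rightarrow> 'a \<Rightarrow> bool) \<Rightarrow> nat \<Rightarrow> nat \<Rightarrow> nat" where
  "sat_star X R n t = (LEAST m. \<exists>F. induced_saturated X R n t F \<and> card F = m)"

text \<open>Chain C_k and antichain A_k on carrier {1..k}.\<close>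
definition chain_le :: "nat \<Rightarrow> nat \<Rightarrow> bool" where "chain_le x y \<longleftrightarrow> x \<le> y"
definition antichain_le :: "nat \<Rightarrow> nat \<Rightarrow> bool" where "antichain_le x y \<longleftrightarrow> x = y"

end

theory Submission
  imports Defs
begin

(* Chains: ordered pointwise, [t]^n has the coordinate sum as a strictly monotone rank function,
   so C_k embeds only if k <= n(t-1)+1.  For such k take the corner c of rank k+n-3 that fills
   the coordinates from the left.  The box below c together with the roof
   {x. x_n = t, and x_i < c_i or x_i = t for i < n} has at most 2^(k-2) points and carries a
   strictly monotone potential with only k-1 values, so it is C_k-free; any further point g lies
   on a k-chain that runs from the bottom up to inf g c, through g, and then through a copy of
   an interval lifted into the roof.

   Antichains, upper bound: the points whose first k-1 coordinates carry one of k-1 pairwise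
   incomparable labels and whose remaining coordinates form a staircase t..t v 1..1 make up
   k-1 chains, hence O(n) points and no A_k.  A point outside them whose tail is not constant
   is incomparable to a staircase point of every label, so a maximal A_k-free family between
   the staircases and the staircases plus the O(1) points with constant tail is saturated.
   Lower bound: a saturated family has width k-1, so by Dilworth it is covered by k-1 chains;
   every point comparable to all of the first chain belongs to the family, and such points
   exist on each of the n(t-1)+1 rank levels. *)

section \<open>Chains and antichains in partial orders\<close>

definition antichain :: "'a::order set \<Rightarrow> bool" where
  "antichain A \<longleftrightarrow> (\<forall>x\<in>A. \<forall>y\<in>A. x \<le> y \<longrightarrow> x = y)"

lemma antichain_subset: "antichain A \<Longrightarrow> B \<subseteq> A \<Longrightarrow> antichain B"
  unfolding antichain_def by blast

lemma antichain_insert: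
  "antichain A \<Longrightarrow> (\<And>x. x \<in> A \<Longrightarrow> \<not> x \<le> g \<and> \<not> g \<le> x) \<Longrightarrow> antichain (insert g A)"
  unfolding antichain_def by blast

lemma inj_on_chain_strict_mono:
  fixes \<pi> :: "'a::order \<Rightarrow> 'b::order"
  assumes "strict_mono_on F \<pi>" "C \<subseteq> F" "Complete_Partial_Order.chain (\<le>) C"
  shows "inj_on \<pi> C"
proof
  fix x y assume xy: "x \<in> C" "y \<in> C" "\<pi> x = \<pi> y"
  show "x = y"
  proof (rule ccontr)
    assume "x \<noteq> y"
    with xy assms(3) have "x < y \<or> y < x"
      by (metis chainD order.not_eq_order_implies_strict)
    with xy assms(1,2) show False
      by (metis less_irrefl strict_mono_onD subsetD)
  qed
qed

lemma card_chain_le_strict_mono: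
  fixes \<pi> :: "'a::order \<Rightarrow> nat"
  assumes "strict_mono_on F \<pi>" "\<pi> ` F \<subseteq> {a..b}" "C \<subseteq> F"
    and "Complete_Partial_Order.chain (\<le>) C"
  shows "card C \<le> b + 1 - a"
proof -
  have "card C = card (\<pi> ` C)"
    using inj_on_chain_strict_mono[OF assms(1,3,4)] by (simp add: card_image)
  also have "\<dots> \<le> card {a..b}"
    using assms(2,3) by (intro card_mono) auto
  finally show ?thesis by simp
qed

lemma finite_chain_has_greatest:
  fixes C :: "'a::order set"
  assumes "Complete_Partial_Order.chain (\<le>) C" "finite C" "C \<noteq> {}"
  obtains m where "m \<in> C" "\<And>x. x \<in> C \<Longrightarrow> x \<le> m"
proof -
  obtain m where m: "m \<in> C" "\<forall>x\<in>C. m \<le> x \<longrightarrow> x = m"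
    using finite_has_maximal[OF assms(2,3)] by blast
  have "x \<le> m" if "x \<in> C" for x
    using chainD[OF assms(1) that m(1)] m(2) that by auto
  with m(1) show ?thesis using that by blast
qed

lemma finite_chain_has_least:
  fixes C :: "'a::order set"
  assumes "Complete_Partial_Order.chain (\<le>) C" "finite C" "C \<noteq> {}"
  obtains m where "m \<in> C" "\<And>x. x \<in> C \<Longrightarrow> m \<le> x"
proof -
  obtain m where m: "m \<in> C" "\<forall>x\<in>C. x \<le> m \<longrightarrow> x = m"
    using finite_has_minimal[OF assms(2,3)] by blast
  have "m \<le> x" if "x \<in> C" for x
    using chainD[OF assms(1) that m(1)] m(2) that by auto
  with m(1) show ?thesis using that by blast
qed

lemma finite_chain_enumeration:
  fixes C :: "'a::order set"
  assumes "Complete_Partial_Order.chain (\<le>) C" "finite C"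
  shows "\<exists>\<phi>. strict_mono_on {1..card C} \<phi> \<and> \<phi> ` {1..card C} = C"
  using assms
proof (induction "card C" arbitrary: C)
  case 0
  then show ?case by (auto simp: strict_mono_on_def)
next
  case (Suc m)
  then have "C \<noteq> {}" by auto
  then obtain gr where gr: "gr \<in> C" "\<And>x. x \<in> C \<Longrightarrow> x \<le> gr"
    using finite_chain_has_greatest[OF Suc.prems] by blast
  have below: "x < gr" if "x \<in> C - {gr}" for x
    using that gr(2)[of x] by (simp add: less_le)
  have "card (C - {gr}) = m" "finite (C - {gr})"
    using Suc.hyps(2) Suc.prems(2) gr(1) by auto
  moreover have "Complete_Partial_Order.chain (\<le>) (C - {gr})"
    using Suc.prems(1) by (rule chain_subset) blast
  ultimately obtain \<psi> where \<psi>: "strict_mono_on {1..m} \<psi>" "\<psi> ` {1..m} = C - {gr}"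
    using Suc.hyps(1) by metis
  define \<phi> where "\<phi> = \<psi>(Suc m := gr)"
  have "strict_mono_on {1..Suc m} \<phi>"
  proof (rule strict_mono_onI)
    fix i j assume "i \<in> {1..Suc m}" "j \<in> {1..Suc m}" "i < j"
    show "\<phi> i < \<phi> j"
    proof (cases "j = Suc m")
      case True
      then have "\<psi> i \<in> C - {gr}"
        using \<open>i \<in> {1..Suc m}\<close> \<open>i < j\<close> \<psi>(2) by auto
      then show ?thesis using True \<open>i < j\<close> below unfolding \<phi>_def by simp
    next
      case False
      then show ?thesis
        using \<open>i \<in> {1..Suc m}\<close> \<open>j \<in> {1..Suc m}\<close> \<open>i < j\<close> \<psi>(1)
        unfolding \<phi>_def by (auto simp: strict_mono_onD)
    qed
  qed
  moreover have "\<phi> ` {1..Suc m} = C"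
  proof -
    have "{1..Suc m} - {Suc m} = {1..m}" by auto
    then show ?thesis
      using \<psi>(2) gr(1) unfolding \<phi>_def fun_upd_image by auto
  qed
  ultimately show ?case using Suc.hyps(2) by metis
qed

lemma card_antichain_le_chain_cover:
  fixes A :: "'a::order set"
  assumes "antichain A" "A \<subseteq> (\<Union>j\<in>J. C j)" "finite J"
    and "\<And>j. j \<in> J \<Longrightarrow> Complete_Partial_Order.chain (\<le>) (C j)"
  shows "card A \<le> card J"
proof -
  obtain f where f: "\<And>a. a \<in> A \<Longrightarrow> f a \<in> J \<and> a \<in> C (f a)"
    using assms(2) by (metis UN_E subsetD)
  have "inj_on f A"
  proof
    fix a b assume ab: "a \<in> A" "b \<in> A" "f a = f b"
    then have "a \<le> b \<or> b \<le> a"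
      using f assms(4) chainD by metis
    with ab(1,2) assms(1) show "a = b"
      unfolding antichain_def by (metis order_antisym)
  qed
  then show ?thesis
    using f assms(3) by (intro card_inj_on_le) auto
qed

lemma chain_stack:
  fixes g :: "'a::order"
  assumes "Complete_Partial_Order.chain (\<le>) A" "Complete_Partial_Order.chain (\<le>) B"
    and "\<And>a. a \<in> A \<Longrightarrow> a < g" "\<And>b. b \<in> B \<Longrightarrow> g < b"
    and "finite A" "finite B"
  shows "Complete_Partial_Order.chain (\<le>) (A \<union> insert g B)"
    and "card (A \<union> insert g B) = card A + card B + 1"
proof -
  have below: "a \<le> b" if "a \<in> A" "b \<in> insert g B" for a b
    using that assms(3,4) by (auto dest: order.strict_trans intro: less_imp_le)
  have "Complete_Partial_Order.chain (\<le>) (insert g B)"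
    using assms(2,4) by (auto simp: chain_def intro: less_imp_le)
  then show "Complete_Partial_Order.chain (\<le>) (A \<union> insert g B)"
    using assms(1) below unfolding chain_def by blast
  have "A \<inter> insert g B = {}"
    using assms(3,4) by (auto dest: order.strict_trans)
  moreover have "g \<notin> B" using assms(4) by blast
  ultimately show "card (A \<union> insert g B) = card A + card B + 1"
    using assms(5,6) by (simp add: card_Un_disjoint)
qed

section \<open>Dilworth's theorem\<close>

lemma antichain_meets_colour:
  fixes S :: "'a::order set"
  assumes col: "col ` S \<subseteq> {..<w}" "\<And>c. Complete_Partial_Order.chain (\<le>) {x \<in> S. col x = c}"
    and A: "A \<subseteq> S" "antichain A" "card A = w" and "c < w"
  shows "\<exists>a\<in>A. col a = c"
proof (rule ccontr)
  assume "\<not> (\<exists>a\<in>A. col a = c)"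
  then have "A \<subseteq> (\<Union>d\<in>{..<w} - {c}. {x \<in> S. col x = d})"
    using A(1) col(1) by (force simp: image_subset_iff)
  then have "card A \<le> card ({..<w} - {c})"
    using A(2) col(2) by (intro card_antichain_le_chain_cover) auto
  then show False using A(3) \<open>c < w\<close> by simp
qed

lemma highest_in_maximum_antichains:
  fixes S :: "'a::order set"
  assumes fin: "finite S"
    and col: "col ` S \<subseteq> {..<w}" "\<And>c. Complete_Partial_Order.chain (\<le>) {x \<in> S. col x = c}"
    and A0: "A0 \<subseteq> S" "antichain A0" "card A0 = w"
  obtains hi where "\<And>c. c < w \<Longrightarrow> hi c \<in> S \<and> col (hi c) = c"
    and "\<And>c. c < w \<Longrightarrow> \<exists>A\<subseteq>S. antichain A \<and> card A = w \<and> hi c \<in> A"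
    and "\<And>c A z. \<lbrakk>A \<subseteq> S; antichain A; card A = w; z \<in> A; col z = c\<rbrakk> \<Longrightarrow> z \<le> hi c"
proof -
  define X where "X c = {z \<in> S. col z = c \<and> (\<exists>A\<subseteq>S. antichain A \<and> card A = w \<and> z \<in> A)}" for c
  have "\<exists>m. m \<in> X c \<and> (\<forall>z\<in>X c. z \<le> m)" if "c < w" for c
  proof -
    have "Complete_Partial_Order.chain (\<le>) (X c)"
      using col(2)[of c] by (rule chain_subset) (auto simp: X_def)
    moreover have "finite (X c)" using fin by (simp add: X_def)
    moreover have "X c \<noteq> {}"
      using antichain_meets_colour[OF col A0 that] A0 unfolding X_def by blast
    ultimately show ?thesis by (metis finite_chain_has_greatest)
  qed
  then obtain hi where hi: "\<And>c. c < w \<Longrightarrow> hi c \<in> X c \<and> (\<forall>z\<in>X c. z \<le> hi c)"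
    by metis
  have "z \<le> hi c" if "A \<subseteq> S" "antichain A" "card A = w" "z \<in> A" "col z = c" for A z c
  proof -
    have "c < w" using that col(1) by auto
    moreover have "z \<in> X c" using that unfolding X_def by blast
    ultimately show ?thesis using hi by blast
  qed
  with hi that show ?thesis unfolding X_def by blast
qed

lemma antichain_highest_in_maximum_antichains:
  fixes S :: "'a::order set"
  assumes col: "col ` S \<subseteq> {..<w}" "\<And>c. Complete_Partial_Order.chain (\<le>) {x \<in> S. col x = c}"
    and hi: "\<And>c. c < w \<Longrightarrow> hi c \<in> S \<and> col (hi c) = c"
      "\<And>c. c < w \<Longrightarrow> \<exists>A\<subseteq>S. antichain A \<and> card A = w \<and> hi c \<in> A"
    and below_hi: "\<And>c A z. \<lbrakk>A \<subseteq> S; antichain A; card A = w; z \<in> A; col z = c\<rbrakk> \<Longrightarrow> z \<le> hi c"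
  shows "antichain (hi ` {..<w})"
  unfolding antichain_def
proof (intro ballI impI)
  fix u v assume "u \<in> hi ` {..<w}" "v \<in> hi ` {..<w}" "u \<le> v"
  then obtain c d where cd: "c < w" "d < w" "u = hi c" "v = hi d" "hi c \<le> hi d"
    by blast
  show "u = v"
  proof (rule ccontr)
    assume "u \<noteq> v"
    obtain A where A: "A \<subseteq> S" "antichain A" "card A = w" "hi d \<in> A"
      using hi(2)[OF cd(2)] by blast
    obtain y where y: "y \<in> A" "col y = c"
      using antichain_meets_colour[OF col A(1-3) cd(1)] by blast
    have "y \<le> hi d"
      using below_hi[OF A(1-3) y] cd(5) by (rule order.trans)
    moreover have "y \<noteq> hi d"
      using y(2) hi(1)[OF cd(1)] hi(1)[OF cd(2)] \<open>u \<noteq> v\<close> cd(3,4) by auto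
    ultimately show False
      using A(2,4) y(1) unfolding antichain_def by blast
  qed
qed

lemma maximal_above_maximum_antichain:
  fixes S :: "'a::order set"
  assumes fin: "finite S" and width: "\<And>A. A \<subseteq> S \<Longrightarrow> antichain A \<Longrightarrow> card A \<le> w"
    and a: "a \<in> S" "\<And>x. x \<in> S \<Longrightarrow> a \<le> x \<Longrightarrow> x = a"
    and T: "T \<subseteq> S - {a}" "antichain T" "card T = w"
  shows "\<exists>x\<in>T. x \<le> a"
proof (rule ccontr)
  assume none: "\<not> (\<exists>x\<in>T. x \<le> a)"
  have "antichain (insert a T)"
    unfolding antichain_def
  proof (intro ballI impI)
    fix u v assume uv: "u \<in> insert a T" "v \<in> insert a T" "u \<le> v"
    consider "u = a" "v = a" | "u \<in> T" "v = a" | "u = a" "v \<in> T" | "u \<in> T" "v \<in> T"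
      using uv(1,2) by blast
    then show "u = v"
    proof cases
      case 2
      then show ?thesis using none uv(3) by blast
    next
      case 3
      then show ?thesis using a(2)[of v] T(1) uv(3) by blast
    next
      case 4
      then show ?thesis using T(2) uv(3) unfolding antichain_def by blast
    qed simp
  qed
  moreover have "insert a T \<subseteq> S" using a(1) T(1) by blast
  ultimately have "card (insert a T) \<le> w" by (rule width[rotated])
  moreover have "card (insert a T) = Suc w"
  proof -
    have "finite T" "a \<notin> T" using finite_subset[OF _ fin] T(1) by blast+
    then show ?thesis using T(3) by simp
  qed
  ultimately show False by simp
qed

lemma chain_meeting_maximum_antichains:
  fixes S :: "'a::order set"
  assumes fin: "finite S" and width: "\<And>A. A \<subseteq> S \<Longrightarrow> antichain A \<Longrightarrow> card A \<le> w"
    and a: "a \<in> S" "\<And>x. x \<in> S \<Longrightarrow> a \<le> x \<Longrightarrow> x = a"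
    and col: "col ` (S - {a}) \<subseteq> {..<w}"
      "\<And>c. Complete_Partial_Order.chain (\<le>) {x \<in> S - {a}. col x = c}"
    and A0: "A0 \<subseteq> S - {a}" "antichain A0" "card A0 = w"
  shows "\<exists>K\<subseteq>S. a \<in> K \<and> Complete_Partial_Order.chain (\<le>) K \<and>
           (\<forall>A\<subseteq>S - {a}. antichain A \<longrightarrow> card A = w \<longrightarrow> A \<inter> K \<noteq> {})"
proof -
  have fin': "finite (S - {a})" using fin by simp
  obtain hi where hi: "\<And>c. c < w \<Longrightarrow> hi c \<in> S - {a} \<and> col (hi c) = c"
    "\<And>c. c < w \<Longrightarrow> \<exists>A\<subseteq>S - {a}. antichain A \<and> card A = w \<and> hi c \<in> A"
    and below_hi: "\<And>c A z. \<lbrakk>A \<subseteq> S - {a}; antichain A; card A = w; z \<in> A; col z = c\<rbrakk>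
       \<Longrightarrow> z \<le> hi c"
    by (rule highest_in_maximum_antichains[OF fin' col A0]) blast
  have hi_antichain: "antichain (hi ` {..<w})"
    using col hi below_hi by (rule antichain_highest_in_maximum_antichains)
  have "inj_on hi {..<w}"
    using hi(1) by (metis inj_onI lessThan_iff)
  then have "card (hi ` {..<w}) = w" by (simp add: card_image)
  moreover have "hi ` {..<w} \<subseteq> S - {a}" using hi by blast
  ultimately have "\<exists>x\<in>hi ` {..<w}. x \<le> a"
    using maximal_above_maximum_antichain[OF fin width a _ hi_antichain] by blast
  then obtain c where c: "c < w" "hi c \<le> a" by blast
  define K where "K = insert a {z \<in> S - {a}. col z = c \<and> z \<le> hi c}"
  have "Complete_Partial_Order.chain (\<le>) {z \<in> S - {a}. col z = c \<and> z \<le> hi c}"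
    using col(2)[of c] by (rule chain_subset) auto
  moreover have "z \<le> a" if "z \<in> K" for z
    using that c(2) unfolding K_def by auto
  ultimately have "Complete_Partial_Order.chain (\<le>) K"
    unfolding K_def chain_def by auto
  moreover have "A \<inter> K \<noteq> {}" if A: "A \<subseteq> S - {a}" "antichain A" "card A = w" for A
  proof -
    obtain z where z: "z \<in> A" "col z = c"
      using antichain_meets_colour[OF col A] c(1) by blast
    then have "z \<le> hi c" using below_hi[OF A] by blast
    then show ?thesis using z A(1) unfolding K_def by auto
  qed
  moreover have "K \<subseteq> S" "a \<in> K" using a(1) unfolding K_def by auto
  ultimately show ?thesis by blast
qed

lemma dilworth_step:
  fixes S :: "'a::order set"
  assumes fin: "finite S" and width: "\<And>A. A \<subseteq> S \<Longrightarrow> antichain A \<Longrightarrow> card A \<le> w"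
    and a: "a \<in> S" "\<And>x. x \<in> S \<Longrightarrow> a \<le> x \<Longrightarrow> x = a"
    and col: "col ` (S - {a}) \<subseteq> {..<w}"
      "\<And>c. Complete_Partial_Order.chain (\<le>) {x \<in> S - {a}. col x = c}"
  shows "\<exists>K\<subseteq>S. a \<in> K \<and> Complete_Partial_Order.chain (\<le>) K \<and>
           (\<forall>A\<subseteq>S - K. antichain A \<longrightarrow> card A < w)"
proof -
  obtain K where K: "K \<subseteq> S" "a \<in> K" "Complete_Partial_Order.chain (\<le>) K"
    "\<forall>A\<subseteq>S - {a}. antichain A \<longrightarrow> card A = w \<longrightarrow> A \<inter> K \<noteq> {}"
  proof (cases "\<exists>A0\<subseteq>S - {a}. antichain A0 \<and> card A0 = w")
    case True
    then obtain A0 where "A0 \<subseteq> S - {a}" "antichain A0" "card A0 = w" by auto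
    then show ?thesis
      using chain_meeting_maximum_antichains[OF fin width a col] that by blast
  next
    case False
    then show ?thesis using that[of "{a}"] a(1) by (auto simp: chain_def)
  qed
  have "card A < w" if A: "A \<subseteq> S - K" "antichain A" for A
  proof -
    have "A \<subseteq> S - {a}" using A(1) K(2) by blast
    then have "card A \<noteq> w" using K(4) A by blast
    moreover have "card A \<le> w" using A by (intro width) auto
    ultimately show ?thesis by simp
  qed
  with K(1-3) show ?thesis by blast
qed

lemma colouring_add_chain:
  fixes S :: "'a::order set"
  assumes K: "K \<subseteq> S" "Complete_Partial_Order.chain (\<le>) K"
    and col: "col ` (S - K) \<subseteq> {..<w}" "\<And>c. Complete_Partial_Order.chain (\<le>) {x \<in> S - K. col x = c}"
  shows "\<exists>col'. col' ` S \<subseteq> {..<Suc w} \<and> (\<forall>c. Complete_Partial_Order.chain (\<le>) {x \<in> S. col' x = c})"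
proof -
  define col' where "col' x = (if x \<in> K then w else col x)" for x
  have "col' ` S \<subseteq> {..<Suc w}"
    using col(1) unfolding col'_def by auto
  moreover have "Complete_Partial_Order.chain (\<le>) {x \<in> S. col' x = c}" for c
  proof (cases "c = w")
    case True
    have "x \<in> K" if "x \<in> S" "col' x = c" for x
    proof (rule ccontr)
      assume "x \<notin> K"
      then have "col x < w" using col(1) \<open>x \<in> S\<close> by auto
      then show False using that \<open>x \<notin> K\<close> True unfolding col'_def by simp
    qed
    then have "{x \<in> S. col' x = c} \<subseteq> K" by blast
    then show ?thesis using K(2) by (rule chain_subset[rotated])
  next
    case False
    then have "{x \<in> S. col' x = c} \<subseteq> {x \<in> S - K. col x = c}"
      unfolding col'_def by auto
    then show ?thesis using col(2) by (rule chain_subset[rotated])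
  qed
  ultimately show ?thesis by blast
qed

(* Galvin's proof. *)
theorem dilworth:
  fixes S :: "'a::order set"
  assumes "finite S" "\<And>A. A \<subseteq> S \<Longrightarrow> antichain A \<Longrightarrow> card A \<le> w"
  shows "\<exists>col. col ` S \<subseteq> {..<w} \<and> (\<forall>c. Complete_Partial_Order.chain (\<le>) {x \<in> S. col x = c})"
  using assms
proof (induction "card S" arbitrary: S w rule: less_induct)
  case less
  show ?case
  proof (cases "S = {}")
    case True
    then show ?thesis by (auto simp: chain_empty)
  next
    case False
    then obtain a where a: "a \<in> S" "\<And>x. x \<in> S \<Longrightarrow> a \<le> x \<Longrightarrow> x = a"
      using finite_has_maximal[OF less.prems(1)] by blast
    have "card (S - {a}) < card S"
      using less.prems(1) a(1) by (rule card_Diff1_less)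
    moreover have "finite (S - {a})" using less.prems(1) by simp
    moreover have "card A \<le> w" if "A \<subseteq> S - {a}" "antichain A" for A
      using that by (intro less.prems(2)) auto
    ultimately have "\<exists>col. col ` (S - {a}) \<subseteq> {..<w} \<and>
        (\<forall>c. Complete_Partial_Order.chain (\<le>) {x \<in> S - {a}. col x = c})"
      by (rule less.hyps)
    then obtain col where col: "col ` (S - {a}) \<subseteq> {..<w}"
      "\<And>c. Complete_Partial_Order.chain (\<le>) {x \<in> S - {a}. col x = c}"
      by auto
    obtain K where K: "K \<subseteq> S" "a \<in> K" "Complete_Partial_Order.chain (\<le>) K"
      "\<forall>A\<subseteq>S - K. antichain A \<longrightarrow> card A < w"
      using dilworth_step[OF less.prems a col] by auto
    have "S - K \<subset> S" using K(1,2) by blast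
    then have "card (S - K) < card S"
      using less.prems(1) by (rule psubset_card_mono[rotated])
    moreover have "finite (S - K)" using less.prems(1) by simp
    moreover have "card A \<le> w - 1" if "A \<subseteq> S - K" "antichain A" for A
      using K(4)[rule_format, OF that] by simp
    ultimately have "\<exists>col'. col' ` (S - K) \<subseteq> {..<w - 1} \<and>
        (\<forall>c. Complete_Partial_Order.chain (\<le>) {x \<in> S - K. col' x = c})"
      by (rule less.hyps)
    then obtain col' where "col' ` (S - K) \<subseteq> {..<w - 1}"
      "\<And>c. Complete_Partial_Order.chain (\<le>) {x \<in> S - K. col' x = c}"
      by auto
    from colouring_add_chain[OF K(1,3) this]
    have "\<exists>col. col ` S \<subseteq> {..<Suc (w - 1)} \<and>
        (\<forall>c. Complete_Partial_Order.chain (\<le>) {x \<in> S. col x = c})" .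
    moreover have "0 < w"
      using K(4)[rule_format, of "{}"] by (simp add: antichain_def)
    ultimately show ?thesis by simp
  qed
qed

section \<open>The hypergrid\<close>

lemma hypergrid_iff:
  "f \<in> hypergrid n t \<longleftrightarrow>
     (\<forall>i\<in>{1..n}. 1 \<le> f i \<and> f i \<le> t) \<and> (\<forall>i. i \<notin> {1..n} \<longrightarrow> f i = undefined)"
  unfolding hypergrid_def PiE_def extensional_def by auto

lemma finite_hypergrid [simp]: "finite (hypergrid n t)"
  unfolding hypergrid_def by (intro finite_PiE) auto

(* Hypergrid points are extensional, so the pointwise order of functions can replace grid_le. *)
lemma grid_le_iff_le:
  assumes "f \<in> hypergrid n t" "g \<in> hypergrid n t"
  shows "grid_le n f g \<longleftrightarrow> f \<le> g"
  using assms unfolding grid_le_def le_fun_def hypergrid_iff by (metis order_refl)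

lemma induced_chain_copy_iff:
  assumes "F \<subseteq> hypergrid n t"
  shows "(\<exists>\<phi>. induced_copy {1..k} chain_le n F \<phi>) \<longleftrightarrow>
         (\<exists>C\<subseteq>F. Complete_Partial_Order.chain (\<le>) C \<and> card C = k)"
proof
  assume "\<exists>\<phi>. induced_copy {1..k} chain_le n F \<phi>"
  then obtain \<phi> where "induced_copy {1..k} chain_le n F \<phi>" ..
  then have \<phi>: "inj_on \<phi> {1..k}" "\<phi> ` {1..k} \<subseteq> F"
    "\<And>x y. x \<in> {1..k} \<Longrightarrow> y \<in> {1..k} \<Longrightarrow> grid_le n (\<phi> x) (\<phi> y) \<longleftrightarrow> x \<le> y"
    unfolding induced_copy_def chain_le_def by auto
  have grid: "\<phi> x \<in> hypergrid n t" if "x \<in> {1..k}" for x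
    using \<phi>(2) assms that by blast
  have le: "\<phi> x \<le> \<phi> y \<longleftrightarrow> x \<le> y" if "x \<in> {1..k}" "y \<in> {1..k}" for x y
    using \<phi>(3)[OF that] grid_le_iff_le[OF grid grid] that by simp
  have "Complete_Partial_Order.chain (\<le>) (\<phi> ` {1..k})"
    by (rule chainI) (auto simp: le)
  with \<phi>(1,2) show "\<exists>C\<subseteq>F. Complete_Partial_Order.chain (\<le>) C \<and> card C = k"
    by (intro exI[of _ "\<phi> ` {1..k}"]) (simp add: card_image)
next
  assume "\<exists>C\<subseteq>F. Complete_Partial_Order.chain (\<le>) C \<and> card C = k"
  then obtain C where C: "C \<subseteq> F" "Complete_Partial_Order.chain (\<le>) C" "card C = k"
    by auto
  have "finite C" using finite_subset[OF subset_trans[OF C(1) assms] finite_hypergrid] .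
  then obtain \<phi> where \<phi>: "strict_mono_on {1..k} \<phi>" "\<phi> ` {1..k} = C"
    using finite_chain_enumeration[OF C(2)] unfolding C(3) by blast
  have grid: "\<phi> x \<in> hypergrid n t" if "x \<in> {1..k}" for x
    using \<phi>(2) C(1) assms that by blast
  have "grid_le n (\<phi> x) (\<phi> y) \<longleftrightarrow> x \<le> y" if "x \<in> {1..k}" "y \<in> {1..k}" for x y
    using strict_mono_on_less_eq[OF \<phi>(1) that] grid_le_iff_le[OF grid grid] that by simp
  then have "induced_copy {1..k} chain_le n F \<phi>"
    using strict_mono_on_imp_inj_on[OF \<phi>(1)] \<phi>(2) C(1)
    unfolding induced_copy_def chain_le_def by blast
  then show "\<exists>\<phi>. induced_copy {1..k} chain_le n F \<phi>" by blast
qed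

lemma induced_antichain_copy_iff:
  assumes "F \<subseteq> hypergrid n t"
  shows "(\<exists>\<phi>. induced_copy {1..k} antichain_le n F \<phi>) \<longleftrightarrow>
         (\<exists>A\<subseteq>F. antichain A \<and> card A = k)"
proof
  assume "\<exists>\<phi>. induced_copy {1..k} antichain_le n F \<phi>"
  then obtain \<phi> where "induced_copy {1..k} antichain_le n F \<phi>" ..
  then have \<phi>: "inj_on \<phi> {1..k}" "\<phi> ` {1..k} \<subseteq> F"
    "\<And>x y. x \<in> {1..k} \<Longrightarrow> y \<in> {1..k} \<Longrightarrow> grid_le n (\<phi> x) (\<phi> y) \<longleftrightarrow> x = y"
    unfolding induced_copy_def antichain_le_def by auto
  have grid: "\<phi> x \<in> hypergrid n t" if "x \<in> {1..k}" for x
    using \<phi>(2) assms that by blast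
  have le: "\<phi> x \<le> \<phi> y \<longleftrightarrow> x = y" if "x \<in> {1..k}" "y \<in> {1..k}" for x y
    using \<phi>(3)[OF that] grid_le_iff_le[OF grid grid] that by simp
  have "antichain (\<phi> ` {1..k})"
    unfolding antichain_def
  proof (intro ballI impI)
    fix u v assume "u \<in> \<phi> ` {1..k}" "v \<in> \<phi> ` {1..k}" "u \<le> v"
    then obtain x y where "x \<in> {1..k}" "y \<in> {1..k}" "u = \<phi> x" "v = \<phi> y" "\<phi> x \<le> \<phi> y"
      by blast
    then show "u = v" using le by simp
  qed
  with \<phi>(1,2) show "\<exists>A\<subseteq>F. antichain A \<and> card A = k"
    by (intro exI[of _ "\<phi> ` {1..k}"]) (simp add: card_image)
next
  assume "\<exists>A\<subseteq>F. antichain A \<and> card A = k"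
  then obtain A where A: "A \<subseteq> F" "antichain A" "card A = k" by auto
  have "finite A" using finite_subset[OF subset_trans[OF A(1) assms] finite_hypergrid] .
  then obtain \<phi> where \<phi>: "bij_betw \<phi> {1..k} A"
    using ex_bij_betw_nat_finite_1[of A] unfolding A(3) by blast
  have "grid_le n (\<phi> x) (\<phi> y) \<longleftrightarrow> x = y" if "x \<in> {1..k}" "y \<in> {1..k}" for x y
  proof -
    have "\<phi> x \<in> A" "\<phi> y \<in> A" using \<phi> that by (auto dest: bij_betw_apply)
    moreover have "\<phi> x \<in> hypergrid n t" "\<phi> y \<in> hypergrid n t"
      using \<open>\<phi> x \<in> A\<close> \<open>\<phi> y \<in> A\<close> A(1) assms by auto
    ultimately have "grid_le n (\<phi> x) (\<phi> y) \<longleftrightarrow> \<phi> x = \<phi> y"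
      using A(2) grid_le_iff_le[of "\<phi> x" n t "\<phi> y"] unfolding antichain_def by auto
    also have "\<dots> \<longleftrightarrow> x = y"
      using \<phi> that unfolding bij_betw_def inj_on_def by blast
    finally show ?thesis .
  qed
  then have "induced_copy {1..k} antichain_le n F \<phi>"
    using \<phi> A(1) unfolding induced_copy_def antichain_le_def bij_betw_def by blast
  then show "\<exists>\<phi>. induced_copy {1..k} antichain_le n F \<phi>" by blast
qed

lemma induced_free_subset:
  assumes "induced_free X R n G" "F \<subseteq> G"
  shows "induced_free X R n F"
  unfolding induced_free_def
proof
  assume "\<exists>\<phi>. induced_copy X R n F \<phi>"
  then obtain \<phi> where "induced_copy X R n F \<phi>" ..
  then have "induced_copy X R n G \<phi>"
    using assms(2) unfolding induced_copy_def by auto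
  with assms(1) show False unfolding induced_free_def by blast
qed

lemma saturated_extension:
  assumes "F0 \<subseteq> U" "U \<subseteq> hypergrid n t" "induced_free X R n F0"
    and extend: "\<And>g. g \<in> hypergrid n t - U \<Longrightarrow> \<not> induced_free X R n (insert g F0)"
  obtains G where "F0 \<subseteq> G" "G \<subseteq> U" "induced_saturated X R n t G"
proof -
  define \<G> where "\<G> = {G. F0 \<subseteq> G \<and> G \<subseteq> U \<and> induced_free X R n G}"
  have "\<G> \<subseteq> Pow U" unfolding \<G>_def by blast
  then have "finite \<G>"
    using finite_subset[OF assms(2) finite_hypergrid] by (simp add: finite_subset)
  moreover have "F0 \<in> \<G>" using assms(1,3) unfolding \<G>_def by blast
  ultimately obtain G where G: "G \<in> \<G>" "\<forall>H\<in>\<G>. G \<le> H \<longrightarrow> H = G"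
    using finite_has_maximal2[of \<G> F0] by auto
  have G_props: "F0 \<subseteq> G" "G \<subseteq> U" "induced_free X R n G"
    using G(1) unfolding \<G>_def by auto
  have "\<not> induced_free X R n (insert g G)" if g: "g \<in> hypergrid n t - G" for g
  proof (cases "g \<in> U")
    case True
    show ?thesis
    proof
      assume "induced_free X R n (insert g G)"
      then have "insert g G \<in> \<G>" using G_props True unfolding \<G>_def by blast
      then have "insert g G = G" using G(2) by blast
      then show False using g by blast
    qed
  next
    case False
    then have "\<not> induced_free X R n (insert g F0)" using extend g by blast
    moreover have "insert g F0 \<subseteq> insert g G" using G_props(1) by blast
    ultimately show ?thesis using induced_free_subset[of X R n "insert g G"] by blast
  qed
  then have "induced_saturated X R n t G"
    using G_props(2,3) assms(2) unfolding induced_saturated_def by blast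
  with G_props(1,2) show ?thesis by (rule that)
qed

lemma sat_star_le: "induced_saturated X R n t F \<Longrightarrow> sat_star X R n t \<le> card F"
  unfolding sat_star_def by (rule Least_le) blast

lemma sat_star_attained:
  "induced_saturated X R n t F \<Longrightarrow> \<exists>G. induced_saturated X R n t G \<and> card G = sat_star X R n t"
  unfolding sat_star_def by (rule LeastI_ex) blast

definition grid_rank :: "nat \<Rightarrow> (nat \<Rightarrow> nat) \<Rightarrow> nat" where
  "grid_rank n f = (\<Sum>i\<in>{1..n}. f i)"

lemma hypergrid_less_imp_ex_less:
  assumes "f \<in> hypergrid n t" "g \<in> hypergrid n t" "f < g"
  obtains i where "i \<in> {1..n}" "f i < g i"
proof -
  have "f \<noteq> g" using \<open>f < g\<close> by simp
  then obtain i where "f i \<noteq> g i" by (metis ext)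
  moreover have "i \<in> {1..n}"
    using calculation assms(1,2) unfolding hypergrid_iff by metis
  moreover have "f i \<le> g i"
    using \<open>f < g\<close> by (simp add: le_fun_def less_le)
  ultimately show ?thesis using that by simp
qed

lemma strict_mono_on_grid_rank: "strict_mono_on (hypergrid n t) (grid_rank n)"
proof (rule strict_mono_onI)
  fix f g assume fg: "f \<in> hypergrid n t" "g \<in> hypergrid n t" "f < g"
  then obtain i where "i \<in> {1..n}" "f i < g i"
    by (rule hypergrid_less_imp_ex_less)
  moreover have "\<forall>j\<in>{1..n}. f j \<le> g j"
    using \<open>f < g\<close> by (simp add: le_fun_def less_le)
  ultimately show "grid_rank n f < grid_rank n g"
    unfolding grid_rank_def by (intro sum_strict_mono_ex1) auto
qed

lemma grid_rank_bounds:
  assumes "f \<in> hypergrid n t"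
  shows "grid_rank n f \<in> {n..n * t}"
proof -
  have "(\<Sum>i\<in>{1..n}. 1) \<le> grid_rank n f"
    using assms unfolding grid_rank_def hypergrid_iff by (intro sum_mono) auto
  moreover have "grid_rank n f \<le> (\<Sum>i\<in>{1..n}. t)"
    using assms unfolding grid_rank_def hypergrid_iff by (intro sum_mono) auto
  ultimately show ?thesis by simp
qed

lemma card_chain_hypergrid:
  assumes "C \<subseteq> hypergrid n t" "Complete_Partial_Order.chain (\<le>) C"
  shows "card C \<le> n * (t - 1) + 1"
proof -
  have "card C \<le> n * t + 1 - n"
    using card_chain_le_strict_mono[OF strict_mono_on_grid_rank _ assms] grid_rank_bounds
    by blast
  then show ?thesis by (simp add: diff_mult_distrib2)
qed

lemma chain_hypergrid_le_iff:
  assumes "C \<subseteq> hypergrid n t" "Complete_Partial_Order.chain (\<le>) C" "x \<in> C" "y \<in> C"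
  shows "x \<le> y \<longleftrightarrow> grid_rank n x \<le> grid_rank n y"
proof
  assume "x \<le> y"
  then show "grid_rank n x \<le> grid_rank n y"
    using assms strict_mono_on_leD[OF strict_mono_on_grid_rank] by blast
next
  assume rank: "grid_rank n x \<le> grid_rank n y"
  show "x \<le> y"
  proof (rule ccontr)
    assume "\<not> x \<le> y"
    then have "y < x" using chainD[OF assms(2-4)] by (auto simp: less_le)
    then have "grid_rank n y < grid_rank n x"
      using assms strict_mono_onD[OF strict_mono_on_grid_rank] by blast
    with rank show False by simp
  qed
qed

definition grid_bot :: "nat \<Rightarrow> nat \<Rightarrow> nat" where
  "grid_bot n = (\<lambda>i. if i \<in> {1..n} then 1 else undefined)"

definition grid_top :: "nat \<Rightarrow> nat \<Rightarrow> nat \<Rightarrow> nat" where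
  "grid_top n t = (\<lambda>i. if i \<in> {1..n} then t else undefined)"

lemma grid_bot_in_hypergrid: "1 \<le> t \<Longrightarrow> grid_bot n \<in> hypergrid n t"
  unfolding grid_bot_def hypergrid_iff by auto

lemma grid_top_in_hypergrid: "1 \<le> t \<Longrightarrow> grid_top n t \<in> hypergrid n t"
  unfolding grid_top_def hypergrid_iff by auto

lemma grid_bot_le: "f \<in> hypergrid n t \<Longrightarrow> grid_bot n \<le> f"
  unfolding grid_bot_def hypergrid_iff le_fun_def by auto

lemma le_grid_top: "f \<in> hypergrid n t \<Longrightarrow> f \<le> grid_top n t"
  unfolding grid_top_def hypergrid_iff le_fun_def by auto

lemma grid_rank_bot [simp]: "grid_rank n (grid_bot n) = n"
  unfolding grid_rank_def grid_bot_def by simp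

lemma grid_rank_top [simp]: "grid_rank n (grid_top n t) = n * t"
  unfolding grid_rank_def grid_top_def by simp

lemma hypergrid_cover_step:
  assumes "p \<in> hypergrid n t" "q \<in> hypergrid n t" "p < q"
  obtains p' where "p' \<in> hypergrid n t" "p < p'" "p' \<le> q"
    "grid_rank n p' = Suc (grid_rank n p)"
proof -
  obtain i where i: "i \<in> {1..n}" "p i < q i"
    using hypergrid_less_imp_ex_less[OF assms] .
  define p' where "p' = p(i := Suc (p i))"
  have "q i \<le> t" using assms(2) i(1) unfolding hypergrid_iff by auto
  then have "p' \<in> hypergrid n t"
    using assms(1) i unfolding p'_def hypergrid_iff by auto
  moreover have "p < p'"
    unfolding p'_def by (auto simp: less_fun_def le_fun_def)
  moreover have "p' \<le> q"
    using less_imp_le[OF \<open>p < q\<close>] i(2) unfolding p'_def by (auto simp: le_fun_def)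
  moreover have "grid_rank n p' = Suc (grid_rank n p)"
  proof -
    have "grid_rank n p' = (\<Sum>j\<in>{1..n}. p j + (if j = i then 1 else 0))"
      unfolding grid_rank_def p'_def by (intro sum.cong) auto
    also have "\<dots> = Suc (grid_rank n p)"
      using i(1) unfolding grid_rank_def by (simp add: sum.distrib)
    finally show ?thesis .
  qed
  ultimately show ?thesis using that by blast
qed

lemma hypergrid_interval_chain:
  assumes "p \<in> hypergrid n t" "q \<in> hypergrid n t" "p \<le> q"
  shows "\<exists>C \<subseteq> hypergrid n t \<inter> {p..q}. Complete_Partial_Order.chain (\<le>) C \<and>
           grid_rank n ` C = {grid_rank n p..grid_rank n q}"
  using assms
proof (induction "grid_rank n q - grid_rank n p" arbitrary: p)
  case 0
  have "p = q"
  proof (rule ccontr)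
    assume "p \<noteq> q"
    with \<open>p \<le> q\<close> have "p < q" by simp
    then have "grid_rank n p < grid_rank n q"
      using strict_mono_onD[OF strict_mono_on_grid_rank 0(2,3)] by blast
    then show False using 0 by simp
  qed
  then show ?case
    using 0 by (intro exI[of _ "{p}"]) (auto simp: chain_def)
next
  case (Suc d)
  then have "p < q" by (auto simp: less_le)
  obtain p' where p': "p' \<in> hypergrid n t" "p < p'" "p' \<le> q"
    "grid_rank n p' = Suc (grid_rank n p)"
    using Suc.prems(1,2) \<open>p < q\<close> by (rule hypergrid_cover_step)
  have "d = grid_rank n q - grid_rank n p'"
    using Suc.hyps(2) p'(4) by simp
  from Suc.hyps(1)[OF this p'(1) Suc.prems(2) p'(3)]
  obtain C where C: "C \<subseteq> hypergrid n t \<inter> {p'..q}"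
    "Complete_Partial_Order.chain (\<le>) C" "grid_rank n ` C = {grid_rank n p'..grid_rank n q}"
    by auto
  have between: "p \<le> x \<and> x \<le> q" if "x \<in> C" for x
  proof -
    have "p' \<le> x" "x \<le> q" using C(1) that by auto
    then show ?thesis using p'(2) by simp
  qed
  then have "Complete_Partial_Order.chain (\<le>) (insert p C)"
    using C(2) unfolding chain_def by auto
  moreover have "insert p C \<subseteq> hypergrid n t \<inter> {p..q}"
    using C(1) between Suc.prems by auto
  moreover have "grid_rank n ` insert p C = {grid_rank n p..grid_rank n q}"
    using C(3) p'(4) Suc.hyps(2) by auto
  ultimately show ?case by blast
qed

lemma card_hypergrid_interval_chain:
  assumes "p \<in> hypergrid n t" "q \<in> hypergrid n t" "p \<le> q"
  obtains C where "C \<subseteq> hypergrid n t \<inter> {p..q}" "Complete_Partial_Order.chain (\<le>) C"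
    "card C = grid_rank n q + 1 - grid_rank n p"
proof -
  obtain C where C: "C \<subseteq> hypergrid n t \<inter> {p..q}" "Complete_Partial_Order.chain (\<le>) C"
    "grid_rank n ` C = {grid_rank n p..grid_rank n q}"
    using hypergrid_interval_chain[OF assms] by auto
  have "inj_on (grid_rank n) C"
    using C(1,2) by (intro inj_on_chain_strict_mono[OF strict_mono_on_grid_rank]) auto
  then have "card C = card {grid_rank n p..grid_rank n q}"
    using C(3) by (metis card_image)
  with C(1,2) that show ?thesis by simp
qed

lemma grid_rank_update:
  assumes "i \<in> {1..n}"
  shows "grid_rank n (f(i := v)) + f i = grid_rank n f + v"
  using assms unfolding grid_rank_def by (simp add: sum.remove)

lemma inf_mem_hypergrid:
  assumes "f \<in> hypergrid n t" "g \<in> hypergrid n t"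
  shows "inf f g \<in> hypergrid n t"
  using assms unfolding hypergrid_iff by (auto simp: inf_min)

lemma grid_rank_mono:
  "f \<in> hypergrid n t \<Longrightarrow> g \<in> hypergrid n t \<Longrightarrow> f \<le> g \<Longrightarrow> grid_rank n f \<le> grid_rank n g"
  by (rule strict_mono_on_leD[OF strict_mono_on_grid_rank])

section \<open>Saturated families for chains\<close>

lemma sum_min_staircase:
  "(\<Sum>i\<in>{1..N}. min d (s - (i - 1) * d)) = min s (N * (d::nat))"
proof (induction N)
  case (Suc N)
  have "(\<Sum>i\<in>{1..Suc N}. min d (s - (i - 1) * d)) = min s (N * d) + min d (s - N * d)"
    using Suc.IH by simp
  also have "\<dots> = min s (Suc N * d)"
    by (cases "s \<le> N * d") (auto simp: min_def)
  finally show ?case .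
qed simp

locale chain_corner =
  fixes n t :: nat and c :: "nat \<Rightarrow> nat"
  assumes n_pos: "1 \<le> n" and corner_in_grid: "c \<in> hypergrid n t"
    and corner_last: "c n < t"
    and corner_full: "\<And>i. 2 \<le> c n \<Longrightarrow> i \<in> {1..<n} \<Longrightarrow> c i = t"
begin

definition box :: "(nat \<Rightarrow> nat) set" where
  "box = PiE {1..n} (\<lambda>i. {1..c i})"

definition roof :: "(nat \<Rightarrow> nat) set" where
  "roof = PiE {1..n} (\<lambda>i. if i = n then {t} else insert t {1..<c i})"

definition potential :: "(nat \<Rightarrow> nat) \<Rightarrow> nat" where
  "potential x = (\<Sum>i\<in>{1..n}. min (x i) (c i)) + (if x n = t then 1 else 0)"

lemma corner_bounds: "i \<in> {1..n} \<Longrightarrow> 1 \<le> c i \<and> c i \<le> t"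
  using corner_in_grid unfolding hypergrid_iff by blast

lemma last_in_range: "n \<in> {1..n}"
  using n_pos by simp

lemma box_iff: "x \<in> box \<longleftrightarrow> x \<in> hypergrid n t \<and> x \<le> c"
proof -
  have "x \<in> box \<longleftrightarrow>
      (\<forall>i\<in>{1..n}. 1 \<le> x i \<and> x i \<le> c i) \<and> (\<forall>i. i \<notin> {1..n} \<longrightarrow> x i = undefined)"
    unfolding box_def PiE_iff extensional_def by auto
  also have "\<dots> \<longleftrightarrow> x \<in> hypergrid n t \<and> x \<le> c"
  proof
    assume x: "(\<forall>i\<in>{1..n}. 1 \<le> x i \<and> x i \<le> c i) \<and> (\<forall>i. i \<notin> {1..n} \<longrightarrow> x i = undefined)"
    have "x i \<le> t" if "i \<in> {1..n}" for i
      using x corner_bounds[OF that] that by (meson order_trans)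
    then have "x \<in> hypergrid n t"
      using x unfolding hypergrid_iff by blast
    moreover have "x i \<le> c i" for i
      using x corner_in_grid unfolding hypergrid_iff by (cases "i \<in> {1..n}") auto
    ultimately show "x \<in> hypergrid n t \<and> x \<le> c"
      by (simp add: le_fun_def)
  next
    assume "x \<in> hypergrid n t \<and> x \<le> c"
    then show "(\<forall>i\<in>{1..n}. 1 \<le> x i \<and> x i \<le> c i) \<and> (\<forall>i. i \<notin> {1..n} \<longrightarrow> x i = undefined)"
      unfolding hypergrid_iff le_fun_def by blast
  qed
  finally show ?thesis .
qed

lemma two_le_t: "2 \<le> t"
  using corner_last corner_bounds[OF last_in_range] by simp

lemma roof_memD:
  assumes "x \<in> roof"
  shows "x \<in> hypergrid n t" "x n = t" "\<And>i. i \<in> {1..<n} \<Longrightarrow> x i < c i \<or> x i = t"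
proof -
  have x: "\<And>i. i \<in> {1..n} \<Longrightarrow> x i \<in> (if i = n then {t} else insert t {1..<c i})"
    "\<And>i. i \<notin> {1..n} \<Longrightarrow> x i = undefined"
    using assms unfolding roof_def PiE_iff extensional_def by auto
  show "x n = t" using x(1)[OF last_in_range] by simp
  have lower: "x i = t \<or> 1 \<le> x i \<and> x i < c i" if "i \<in> {1..<n}" for i
    using x(1)[of i] that by auto
  then show "x i < c i \<or> x i = t" if "i \<in> {1..<n}" for i
    using that by blast
  have "1 \<le> x i \<and> x i \<le> t" if i: "i \<in> {1..n}" for i
  proof (cases "i = n")
    case True
    then show ?thesis using \<open>x n = t\<close> two_le_t by simp
  next
    case False
    then have "i \<in> {1..<n}" using i by simp
    then show ?thesis using lower[of i] corner_bounds[OF i] two_le_t by auto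
  qed
  then show "x \<in> hypergrid n t"
    using x(2) unfolding hypergrid_iff by blast
qed

lemma roof_memI:
  assumes "x \<in> hypergrid n t" "x n = t" "\<And>i. i \<in> {1..<n} \<Longrightarrow> x i < c i \<or> x i = t"
  shows "x \<in> roof"
proof -
  have "x i \<in> (if i = n then {t} else insert t {1..<c i})" if i: "i \<in> {1..n}" for i
  proof (cases "i = n")
    case False
    then have "i \<in> {1..<n}" using i by simp
    moreover have "1 \<le> x i" using assms(1) i unfolding hypergrid_iff by blast
    ultimately show ?thesis using assms(3) False by auto
  qed (use assms(2) in simp)
  moreover have "x i = undefined" if "i \<notin> {1..n}" for i
    using assms(1) that unfolding hypergrid_iff by blast
  ultimately show ?thesis
    unfolding roof_def PiE_iff extensional_def by blast
qed

lemma box_last_less: "x \<in> box \<Longrightarrow> x n < t"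
  using corner_last unfolding box_iff le_fun_def by (meson le_less_trans)

lemma family_subset: "box \<union> roof \<subseteq> hypergrid n t"
  using box_iff roof_memD(1) by blast

lemma potential_strict_mono: "strict_mono_on (box \<union> roof) potential"
proof (rule strict_mono_onI)
  fix x y assume x: "x \<in> box \<union> roof" and y: "y \<in> box \<union> roof" and "x < y"
  have grid: "x \<in> hypergrid n t" "y \<in> hypergrid n t"
    using x y family_subset by auto
  have "x \<le> y" using \<open>x < y\<close> by simp
  then have sum_le: "(\<Sum>i\<in>{1..n}. min (x i) (c i)) \<le> (\<Sum>i\<in>{1..n}. min (y i) (c i))"
    by (intro sum_mono) (simp add: le_fun_def min.coboundedI1)
  have sum_less: "(\<Sum>i\<in>{1..n}. min (x i) (c i)) < (\<Sum>i\<in>{1..n}. min (y i) (c i))"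
    if "i \<in> {1..n}" "x i < y i" "x i < c i" for i
  proof (rule sum_strict_mono_ex1)
    show "\<forall>j\<in>{1..n}. min (x j) (c j) \<le> min (y j) (c j)"
      using \<open>x \<le> y\<close> by (simp add: le_fun_def min.coboundedI1)
    show "\<exists>j\<in>{1..n}. min (x j) (c j) < min (y j) (c j)"
      using that by (intro bexI[of _ i]) auto
  qed simp
  have "y n \<le> t" using grid(2) last_in_range unfolding hypergrid_iff by blast
  then have ind_le: "(if x n = t then 1 else 0) \<le> (if y n = t then 1 else (0::nat))"
    using \<open>x \<le> y\<close> by (auto simp: le_fun_def intro: order.antisym)
  obtain i where i: "i \<in> {1..n}" "x i < y i"
    using hypergrid_less_imp_ex_less[OF grid \<open>x < y\<close>] .
  show "potential x < potential y"
  proof (cases "y \<in> box")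
    case True
    then have "x i < c i" using i(2) unfolding box_iff le_fun_def by (meson order.strict_trans2)
    then show ?thesis using sum_less[OF i] ind_le unfolding potential_def by simp
  next
    case False
    then have "y n = t" using y roof_memD(2) by blast
    show ?thesis
    proof (cases "x n = t")
      case True
      then have "x \<in> roof" using x box_last_less by auto
      have "x i \<noteq> t" using i(2) grid(2) i(1) unfolding hypergrid_iff by fastforce
      then have "i \<in> {1..<n}" using i(1) True by (cases "i = n") auto
      then have "x i < c i" using roof_memD(3)[OF \<open>x \<in> roof\<close>] \<open>x i \<noteq> t\<close> by blast
      then show ?thesis using sum_less[OF i] ind_le unfolding potential_def by simp
    next
      case False
      then show ?thesis using sum_le \<open>y n = t\<close> unfolding potential_def by simp
    qed
  qed
qed

lemma potential_range: "x \<in> box \<union> roof \<Longrightarrow> potential x \<in> {n..grid_rank n c + 1}"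
proof -
  assume "x \<in> box \<union> roof"
  then have x: "x \<in> hypergrid n t" using family_subset by auto
  have "(\<Sum>i\<in>{1..n}. 1) \<le> (\<Sum>i\<in>{1..n}. min (x i) (c i))"
    using x corner_bounds unfolding hypergrid_iff by (intro sum_mono) auto
  moreover have "(\<Sum>i\<in>{1..n}. min (x i) (c i)) \<le> grid_rank n c"
    unfolding grid_rank_def by (intro sum_mono) simp
  ultimately show ?thesis unfolding potential_def by auto
qed

lemma card_chain_family:
  assumes "C \<subseteq> box \<union> roof" "Complete_Partial_Order.chain (\<le>) C"
  shows "card C \<le> grid_rank n c + 2 - n"
  using card_chain_le_strict_mono[OF potential_strict_mono _ assms] potential_range by force

(* Carries the interval from (inf g c)(n := t) to c(n := t) order-isomorphically into the part
   of the roof above g. *)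
definition lift :: "(nat \<Rightarrow> nat) \<Rightarrow> nat \<Rightarrow> nat" where
  "lift x = (\<lambda>i. if i \<in> {1..<n} \<and> x i = c i then t else x i)"

lemma lift_le_iff:
  assumes "x \<le> c(n := t)" "y \<le> c(n := t)"
  shows "lift x \<le> lift y \<longleftrightarrow> x \<le> y"
proof -
  have "lift x i \<le> lift y i \<longleftrightarrow> x i \<le> y i" for i
  proof (cases "i \<in> {1..<n}")
    case True
    then have "x i \<le> c i" "y i \<le> c i" "c i \<le> t"
      using assms corner_bounds[of i] by (auto simp: le_fun_def split: if_splits)
    then show ?thesis unfolding lift_def using True by auto
  next
    case False
    then have "lift x i = x i" "lift y i = y i" unfolding lift_def by auto
    then show ?thesis by simp
  qed
  then show ?thesis by (simp add: le_fun_def)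
qed

lemma lift_mem_roof:
  assumes g: "g \<in> hypergrid n t"
    and x: "x \<in> hypergrid n t" "(inf g c)(n := t) \<le> x" "x \<le> c(n := t)"
  shows "lift x \<in> roof" "g \<le> lift x"
proof -
  have xi: "min (g i) (c i) \<le> x i \<and> x i \<le> c i" if "i \<in> {1..<n}" for i
    using x(2,3) that unfolding le_fun_def by (metis atLeastLessThan_iff fun_upd_other inf_fun_def
        inf_min less_irrefl)
  have xn: "x n = t"
    using x(2,3) unfolding le_fun_def by (metis fun_upd_same order.antisym)
  have x_range: "1 \<le> x i \<and> x i \<le> t" if "i \<in> {1..n}" for i
    using x(1) that unfolding hypergrid_iff by blast
  show "lift x \<in> roof"
  proof (rule roof_memI)
    show "lift x \<in> hypergrid n t"
      using x(1) x_range two_le_t unfolding hypergrid_iff lift_def by auto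
    show "lift x n = t" using xn unfolding lift_def by simp
    show "lift x i < c i \<or> lift x i = t" if "i \<in> {1..<n}" for i
      using xi[OF that] that unfolding lift_def by auto
  qed
  have "g i \<le> lift x i" for i
  proof (cases "i \<in> {1..<n}")
    case True
    then show ?thesis
      using xi[OF True] g unfolding lift_def hypergrid_iff by (auto simp: min_def split: if_splits)
  next
    case False
    then show ?thesis
      using xn g x(1) unfolding lift_def hypergrid_iff by (cases "i = n") auto
  qed
  then show "g \<le> lift x" by (simp add: le_fun_def)
qed

lemma last_le_of_not_in_box:
  assumes "g \<in> hypergrid n t" "g \<notin> box"
  shows "c n \<le> g n"
proof (rule ccontr)
  assume less: "\<not> c n \<le> g n"
  have "1 \<le> g n" using assms(1) last_in_range unfolding hypergrid_iff by blast
  with less have full: "c i = t" if "i \<in> {1..<n}" for i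
    using corner_full that by simp
  have "g i \<le> c i" for i
  proof (cases "i \<in> {1..n}")
    case True
    then show ?thesis
      using full[of i] less assms(1) unfolding hypergrid_iff by (cases "i = n") auto
  next
    case False
    then show ?thesis using assms(1) corner_in_grid unfolding hypergrid_iff by auto
  qed
  then have "g \<in> box" using assms(1) box_iff by (simp add: le_fun_def)
  with assms(2) show False ..
qed

lemma chain_below:
  assumes g: "g \<in> hypergrid n t" "g \<notin> box"
  obtains C where "C \<subseteq> box" "Complete_Partial_Order.chain (\<le>) C" "\<And>x. x \<in> C \<Longrightarrow> x < g"
    "card C = grid_rank n (inf g c) + 1 - n"
proof -
  have low: "inf g c \<in> hypergrid n t"
    using g(1) corner_in_grid by (rule inf_mem_hypergrid)
  have bot: "grid_bot n \<in> hypergrid n t"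
    using two_le_t by (intro grid_bot_in_hypergrid) simp
  obtain C where C: "C \<subseteq> hypergrid n t \<inter> {grid_bot n..inf g c}"
    "Complete_Partial_Order.chain (\<le>) C"
    "card C = grid_rank n (inf g c) + 1 - grid_rank n (grid_bot n)"
    by (rule card_hypergrid_interval_chain[OF bot low grid_bot_le[OF low]])
  have "x \<in> box" "x < g" if "x \<in> C" for x
  proof -
    have "x \<in> hypergrid n t" "x \<le> inf g c" using C(1) that by auto
    then show "x \<in> box" using box_iff by (meson inf.bounded_iff)
    then have "x \<noteq> g" using g(2) by blast
    then show "x < g" using \<open>x \<le> inf g c\<close> by (simp add: less_le)
  qed
  then show ?thesis
    using that[of C] C(2,3) by auto
qed

lemma chain_above:
  assumes g: "g \<in> hypergrid n t" "g \<notin> box \<union> roof"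
  obtains C where "C \<subseteq> roof" "Complete_Partial_Order.chain (\<le>) C" "\<And>x. x \<in> C \<Longrightarrow> g < x"
    "card C = grid_rank n c + 1 - grid_rank n (inf g c)"
proof -
  define p where "p = (inf g c)(n := t)"
  define q where "q = c(n := t)"
  have low: "inf g c \<in> hypergrid n t"
    using g(1) corner_in_grid by (rule inf_mem_hypergrid)
  have "p \<in> hypergrid n t" "q \<in> hypergrid n t"
    using low corner_in_grid last_in_range two_le_t unfolding p_def q_def hypergrid_iff by auto
  moreover have "p \<le> q" unfolding p_def q_def by (simp add: le_fun_def inf_min)
  ultimately obtain C where C: "C \<subseteq> hypergrid n t \<inter> {p..q}" "Complete_Partial_Order.chain (\<le>) C"
    "card C = grid_rank n q + 1 - grid_rank n p"
    by (rule card_hypergrid_interval_chain)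
  have lifted: "lift x \<in> roof \<and> g < lift x" if "x \<in> C" for x
  proof -
    have "x \<in> hypergrid n t" "p \<le> x" "x \<le> q" using C(1) that by auto
    then have "lift x \<in> roof" "g \<le> lift x"
      using lift_mem_roof[OF g(1)] unfolding p_def q_def by auto
    moreover have "g \<noteq> lift x" using g(2) \<open>lift x \<in> roof\<close> by blast
    ultimately show ?thesis by (simp add: less_le)
  qed
  have below_q: "x \<le> c(n := t)" if "x \<in> C" for x
    using C(1) that unfolding q_def by auto
  have le_iff: "lift x \<le> lift y \<longleftrightarrow> x \<le> y" if "x \<in> C" "y \<in> C" for x y
    using lift_le_iff[OF below_q below_q] that by blast
  have "Complete_Partial_Order.chain (\<le>) (lift ` C)"
    by (rule chain_imageI[OF C(2)]) (simp add: le_iff)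
  moreover have "inj_on lift C"
    using le_iff by (intro inj_onI) (metis order.antisym order.refl)
  moreover have "grid_rank n q + 1 - grid_rank n p = grid_rank n c + 1 - grid_rank n (inf g c)"
  proof -
    have "inf g c n = c n"
      using last_le_of_not_in_box g by (simp add: inf_min)
    moreover have "grid_rank n p + inf g c n = grid_rank n (inf g c) + t"
      unfolding p_def using last_in_range by (rule grid_rank_update)
    moreover have "grid_rank n q + c n = grid_rank n c + t"
      unfolding q_def using last_in_range by (rule grid_rank_update)
    ultimately show ?thesis by linarith
  qed
  ultimately show ?thesis
    using that[of "lift ` C"] lifted C(3) by (auto simp: card_image)
qed

lemma saturating_chain:
  assumes "g \<in> hypergrid n t" "g \<notin> box \<union> roof"
  shows "\<exists>C\<subseteq>insert g (box \<union> roof). Complete_Partial_Order.chain (\<le>) C \<and>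
           card C = grid_rank n c + 3 - n"
proof -
  obtain C1 where C1: "C1 \<subseteq> box" "Complete_Partial_Order.chain (\<le>) C1" "\<And>x. x \<in> C1 \<Longrightarrow> x < g"
    "card C1 = grid_rank n (inf g c) + 1 - n"
    using chain_below assms by blast
  obtain C2 where C2: "C2 \<subseteq> roof" "Complete_Partial_Order.chain (\<le>) C2" "\<And>x. x \<in> C2 \<Longrightarrow> g < x"
    "card C2 = grid_rank n c + 1 - grid_rank n (inf g c)"
    using chain_above assms by blast
  have "finite C1" "finite C2"
    using C1(1) C2(1) family_subset finite_subset[OF _ finite_hypergrid] by blast+
  note stack = chain_stack[OF C1(2) C2(2) C1(3) C2(3) this]
  have low: "inf g c \<in> hypergrid n t"
    using assms(1) corner_in_grid by (rule inf_mem_hypergrid)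
  have "n \<le> grid_rank n (inf g c)" using grid_rank_bounds[OF low] by simp
  moreover have "grid_rank n (inf g c) \<le> grid_rank n c"
    using low corner_in_grid by (rule grid_rank_mono) simp
  ultimately have "card (C1 \<union> insert g C2) = grid_rank n c + 3 - n"
    using stack(2) C1(4) C2(4) by linarith
  moreover have "C1 \<union> insert g C2 \<subseteq> insert g (box \<union> roof)" using C1(1) C2(1) by blast
  ultimately show ?thesis using stack(1) by blast
qed

lemma card_family: "card (box \<union> roof) \<le> 2 ^ (grid_rank n c + 1 - n)"
proof -
  define P where "P = (\<Prod>i\<in>{1..<n}. c i)"
  have range: "{1..n} = insert n {1..<n}" using n_pos by auto
  have "card box = (\<Prod>i\<in>{1..n}. c i)"
    unfolding box_def by (simp add: card_PiE)
  also have "\<dots> = c n * P"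
    unfolding P_def range by simp
  finally have "card box = c n * P" .
  moreover have "card roof = P"
  proof -
    have "card (insert t {1..<c i}) = c i" if "i \<in> {1..<n}" for i
    proof -
      have "1 \<le> c i" "c i \<le> t" using corner_bounds that by auto
      then show ?thesis by (cases "c i = t") (auto simp: card_insert_if)
    qed
    then have "(\<Prod>i\<in>{1..<n}. card (if i = n then {t} else insert t {1..<c i})) = P"
      unfolding P_def by (intro prod.cong) auto
    moreover have "card roof = (\<Prod>i\<in>{1..n}. card (if i = n then {t} else insert t {1..<c i}))"
      unfolding roof_def by (simp add: card_PiE)
    ultimately show ?thesis
      unfolding range by simp
  qed
  ultimately have "card (box \<union> roof) \<le> (c n + 1) * P"
    using card_Un_le[of box roof] by (simp add: algebra_simps)
  also have "\<dots> \<le> (2 * 2 ^ (c n - 1)) * (\<Prod>i\<in>{1..<n}. 2 ^ (c i - 1))"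
  proof (rule mult_mono)
    have "c n - 1 < 2 ^ (c n - 1)" by (rule less_exp)
    then show "c n + 1 \<le> 2 * 2 ^ (c n - 1)"
      using corner_bounds[OF last_in_range] by linarith
    have "c i \<le> 2 ^ (c i - 1)" if "i \<in> {1..<n}" for i
    proof -
      have "c i - 1 < 2 ^ (c i - 1)" by (rule less_exp)
      moreover have "1 \<le> c i" using corner_bounds that by simp
      ultimately show ?thesis by linarith
    qed
    then show "P \<le> (\<Prod>i\<in>{1..<n}. 2 ^ (c i - 1))"
      unfolding P_def by (intro prod_mono) auto
  qed simp_all
  also have "\<dots> = 2 * (\<Prod>i\<in>{1..n}. 2 ^ (c i - 1))"
    unfolding range by simp
  also have "\<dots> = 2 * 2 ^ (\<Sum>i\<in>{1..n}. c i - 1)"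
    by (simp add: power_sum)
  also have "(\<Sum>i\<in>{1..n}. c i - 1) = grid_rank n c - n"
    using corner_bounds unfolding grid_rank_def by (subst sum_subtractf_nat) auto
  also have "2 * 2 ^ (grid_rank n c - n) = (2::nat) ^ (grid_rank n c + 1 - n)"
    using grid_rank_bounds[OF corner_in_grid] by (simp add: Suc_diff_le)
  finally show ?thesis .
qed

lemma family_saturated:
  "induced_saturated {1..grid_rank n c + 3 - n} chain_le n t (box \<union> roof)"
  unfolding induced_saturated_def induced_free_def
proof (intro conjI ballI)
  let ?k = "grid_rank n c + 3 - n"
  show "box \<union> roof \<subseteq> hypergrid n t" by (rule family_subset)
  have "n \<le> grid_rank n c" using grid_rank_bounds[OF corner_in_grid] by simp
  then have "card C < ?k" if "C \<subseteq> box \<union> roof" "Complete_Partial_Order.chain (\<le>) C" for C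
    using card_chain_family[OF that] by linarith
  then show "\<not> (\<exists>\<phi>. induced_copy {1..?k} chain_le n (box \<union> roof) \<phi>)"
    using induced_chain_copy_iff[OF family_subset] by (metis less_irrefl)
  fix g assume g: "g \<in> hypergrid n t - (box \<union> roof)"
  then have "insert g (box \<union> roof) \<subseteq> hypergrid n t" using family_subset by blast
  then show "\<not> \<not> (\<exists>\<phi>. induced_copy {1..?k} chain_le n (insert g (box \<union> roof)) \<phi>)"
    using induced_chain_copy_iff saturating_chain g by (metis DiffE)
qed

end

lemma chain_corner_exists:
  assumes n: "1 \<le> n" and t: "2 \<le> t" and k: "3 \<le> k" "k \<le> n * (t - 1) + 1"
  obtains c where "chain_corner n t c" "grid_rank n c = k + n - 3"
proof -
  define s where "s = k - 3"
  \<comment> \<open>coordinate i takes what the first i - 1 coordinates, each raised by t - 1, leave of s\<close>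
  define c where "c i = (if i \<in> {1..n} then 1 + min (t - 1) (s - (i - 1) * (t - 1)) else undefined)"
    for i
  have split: "n * (t - 1) = (n - 1) * (t - 1) + (t - 1)"
    using n by (cases n) auto
  have s_le: "s + 2 \<le> n * (t - 1)" using k unfolding s_def by linarith
  have "grid_rank n c = (\<Sum>i\<in>{1..n}. 1 + min (t - 1) (s - (i - 1) * (t - 1)))"
    unfolding grid_rank_def c_def by (intro sum.cong) auto
  also have "\<dots> = n + min s (n * (t - 1))"
    unfolding sum.distrib sum_min_staircase by simp
  finally have "grid_rank n c = n + min s (n * (t - 1))" .
  then have rank: "grid_rank n c = k + n - 3"
    using s_le k unfolding s_def by simp
  have "c \<in> hypergrid n t"
    using t unfolding c_def hypergrid_iff by auto
  moreover have "c n < t"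
  proof -
    have "s - (n - 1) * (t - 1) < t - 1" using s_le split t by linarith
    then show ?thesis using n t unfolding c_def by auto
  qed
  moreover have "c i = t" if "2 \<le> c n" "i \<in> {1..<n}" for i
  proof -
    have "(n - 1) * (t - 1) < s" using that(1) n unfolding c_def by auto
    moreover have "(i - 1) * (t - 1) + (t - 1) = i * (t - 1)"
      using that(2) by (cases i) auto
    moreover have "i * (t - 1) \<le> (n - 1) * (t - 1)"
      using that(2) by (intro mult_le_mono1) auto
    ultimately have "t - 1 \<le> s - (i - 1) * (t - 1)" by linarith
    then show ?thesis
      using that(2) t unfolding c_def by auto
  qed
  ultimately have "chain_corner n t c"
    using n by unfold_locales auto
  with rank show ?thesis using that by blast
qed

theorem chain_saturated_family_exists:
  assumes n: "1 \<le> n" and t: "2 \<le> t" and k: "2 \<le> k" "k \<le> n * (t - 1) + 1"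
  shows "\<exists>F. induced_saturated {1..k} chain_le n t F \<and> card F \<le> 2 ^ (k - 2)"
proof (cases "k = 2")
  case True
  have bot: "grid_bot n \<in> hypergrid n t" using t by (intro grid_bot_in_hypergrid) simp
  have "\<not> (\<exists>\<phi>. induced_copy {1..k} chain_le n {grid_bot n} \<phi>)"
    using True induced_chain_copy_iff[of "{grid_bot n}"] bot by (auto dest: card_mono[rotated])
  moreover have "\<exists>\<phi>. induced_copy {1..k} chain_le n (insert g {grid_bot n}) \<phi>"
    if "g \<in> hypergrid n t - {grid_bot n}" for g
  proof -
    have sub: "insert g {grid_bot n} \<subseteq> hypergrid n t" using that bot by auto
    have "Complete_Partial_Order.chain (\<le>) {grid_bot n, g}"
      using grid_bot_le that by (auto simp: chain_def)
    moreover have "card {grid_bot n, g} = k" using True that by auto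
    ultimately have "\<exists>C\<subseteq>insert g {grid_bot n}. Complete_Partial_Order.chain (\<le>) C \<and> card C = k"
      by (intro exI[of _ "{grid_bot n, g}"]) auto
    then show ?thesis using induced_chain_copy_iff[OF sub] by blast
  qed
  ultimately have "induced_saturated {1..k} chain_le n t {grid_bot n}"
    unfolding induced_saturated_def induced_free_def using bot by blast
  then show ?thesis using True by (intro exI[of _ "{grid_bot n}"]) simp
next
  case False
  then have "3 \<le> k" using k by simp
  then obtain c where corner: "chain_corner n t c" and rank: "grid_rank n c = k + n - 3"
    by (rule chain_corner_exists[OF n t _ k(2)])
  interpret chain_corner n t c by (rule corner)
  have "grid_rank n c + 3 - n = k" "grid_rank n c + 1 - n = k - 2"
    using rank \<open>3 \<le> k\<close> by auto
  then show ?thesis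
    using family_saturated card_family by auto
qed

theorem sat_star_chain_le:
  assumes k: "2 \<le> k" and t: "2 \<le> t" and n: "1 \<le> n"
    and embeds: "embeds_in_grid {1..k} chain_le n t"
  shows "sat_star {1..k} chain_le n t \<le> 2 ^ (k - 2)"
proof -
  obtain C where "C \<subseteq> hypergrid n t" "Complete_Partial_Order.chain (\<le>) C" "card C = k"
    using embeds induced_chain_copy_iff[of "hypergrid n t" n t k]
    unfolding embeds_in_grid_def by auto
  then have "k \<le> n * (t - 1) + 1"
    using card_chain_hypergrid by metis
  then obtain F where "induced_saturated {1..k} chain_le n t F" "card F \<le> 2 ^ (k - 2)"
    using chain_saturated_family_exists[OF n t k] by blast
  then show ?thesis using sat_star_le order_trans by blast
qed

section \<open>Saturated families for antichains\<close>

lemma comparable_at_every_rank: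
  assumes C: "C \<subseteq> hypergrid n t" "Complete_Partial_Order.chain (\<le>) C"
    "grid_bot n \<in> C" "grid_top n t \<in> C"
    and r: "r \<in> {n..n * t}"
  obtains g where "g \<in> hypergrid n t" "grid_rank n g = r" "\<And>x. x \<in> C \<Longrightarrow> x \<le> g \<or> g \<le> x"
proof -
  have fin: "finite C" using finite_subset[OF C(1)] by simp
  define lower where "lower = {x \<in> C. grid_rank n x \<le> r}"
  define upper where "upper = {x \<in> C. r \<le> grid_rank n x}"
  have "lower \<noteq> {}" "upper \<noteq> {}"
    using C(3,4) r unfolding lower_def upper_def by auto
  moreover have "Complete_Partial_Order.chain (\<le>) lower" "Complete_Partial_Order.chain (\<le>) upper"
    using C(2) unfolding lower_def upper_def by (auto intro: chain_subset)
  moreover have "finite lower" "finite upper"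
    using fin unfolding lower_def upper_def by auto
  ultimately obtain a b where a: "a \<in> lower" "\<And>x. x \<in> lower \<Longrightarrow> x \<le> a"
    and b: "b \<in> upper" "\<And>x. x \<in> upper \<Longrightarrow> b \<le> x"
    by (meson finite_chain_has_greatest finite_chain_has_least)
  have grid: "a \<in> hypergrid n t" "b \<in> hypergrid n t"
    using a(1) b(1) C(1) unfolding lower_def upper_def by auto
  have "a \<le> b"
    using chain_hypergrid_le_iff[OF C(1,2)] a(1) b(1) unfolding lower_def upper_def by auto
  then obtain D where D: "D \<subseteq> hypergrid n t \<inter> {a..b}"
    "grid_rank n ` D = {grid_rank n a..grid_rank n b}"
    using hypergrid_interval_chain[OF grid] by auto
  have "r \<in> grid_rank n ` D"
    using D(2) a(1) b(1) unfolding lower_def upper_def by auto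
  then obtain g where g: "g \<in> D" "grid_rank n g = r" by auto
  have ag: "a \<le> g" "g \<le> b" using D(1) g(1) by auto
  have "x \<le> g \<or> g \<le> x" if "x \<in> C" for x
  proof (cases "grid_rank n x \<le> r")
    case True
    then have "x \<le> a" using a(2) that unfolding lower_def by auto
    then show ?thesis using ag by (auto intro: order.trans)
  next
    case False
    then have "b \<le> x" using b(2) that unfolding upper_def by auto
    then show ?thesis using ag by (auto intro: order.trans)
  qed
  with g D(1) that show ?thesis by blast
qed

lemma card_antichain_less_of_free:
  assumes "F \<subseteq> hypergrid n t" "induced_free {1..k} antichain_le n F"
    and "A \<subseteq> F" "antichain A"
  shows "card A < k"
proof (rule ccontr)
  assume "\<not> card A < k"
  then obtain B where "B \<subseteq> A" "card B = k"
    by (meson not_less obtain_subset_with_card_n)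
  moreover have "antichain B" using \<open>antichain A\<close> \<open>B \<subseteq> A\<close> by (rule antichain_subset)
  ultimately have "\<exists>\<phi>. induced_copy {1..k} antichain_le n F \<phi>"
    using induced_antichain_copy_iff[OF assms(1)] assms(3) by blast
  with assms(2) show False unfolding induced_free_def by blast
qed

lemma antichain_saturated_contains_comparable:
  assumes sat: "induced_saturated {1..k} antichain_le n t F" and "2 \<le> k"
    and col: "col ` F \<subseteq> {..<k - 1}" "\<And>c. Complete_Partial_Order.chain (\<le>) {x \<in> F. col x = c}"
    and g: "g \<in> hypergrid n t" "\<And>x. x \<in> F \<Longrightarrow> col x = 0 \<Longrightarrow> x \<le> g \<or> g \<le> x"
  shows "g \<in> F"
proof (rule ccontr)
  assume "g \<notin> F"
  have F: "F \<subseteq> hypergrid n t" "induced_free {1..k} antichain_le n F"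
    using sat unfolding induced_saturated_def by auto
  have sub: "insert g F \<subseteq> hypergrid n t" using F(1) g(1) by blast
  have "\<not> induced_free {1..k} antichain_le n (insert g F)"
    using sat g(1) \<open>g \<notin> F\<close> unfolding induced_saturated_def by blast
  then have "\<exists>A\<subseteq>insert g F. antichain A \<and> card A = k"
    using induced_antichain_copy_iff[OF sub] unfolding induced_free_def by simp
  then obtain A where A: "A \<subseteq> insert g F" "antichain A" "card A = k" by auto
  have "g \<in> A"
    using card_antichain_less_of_free[OF F, of A] A by blast
  have "A - {g} \<subseteq> (\<Union>c\<in>{1..<k - 1}. {x \<in> F. col x = c})"
  proof
    fix x assume x: "x \<in> A - {g}"
    then have "x \<in> F" using A(1) by blast
    moreover have "col x \<noteq> 0"
      using g(2)[OF \<open>x \<in> F\<close>] A(2) x \<open>g \<in> A\<close> unfolding antichain_def by auto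
    ultimately show "x \<in> (\<Union>c\<in>{1..<k - 1}. {x \<in> F. col x = c})"
      using col(1) by force
  qed
  then have "card (A - {g}) \<le> card {1..<k - 1}"
    using A(2) col(2) by (intro card_antichain_le_chain_cover) (auto intro: antichain_subset)
  then show False
    using A(3) \<open>g \<in> A\<close> \<open>2 \<le> k\<close> card_Diff_singleton[of g A] by (cases "finite A") auto
qed

theorem card_antichain_saturated_ge:
  assumes "2 \<le> k" "1 \<le> t" and sat: "induced_saturated {1..k} antichain_le n t F"
  shows "n * (t - 1) + 1 \<le> card F"
proof -
  have F: "F \<subseteq> hypergrid n t" "induced_free {1..k} antichain_le n F"
    using sat unfolding induced_saturated_def by auto
  have "finite F" using finite_subset[OF F(1)] by simp
  moreover have "card A \<le> k - 1" if "A \<subseteq> F" "antichain A" for A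
    using card_antichain_less_of_free[OF F that] by simp
  ultimately have "\<exists>col. col ` F \<subseteq> {..<k - 1} \<and>
      (\<forall>c. Complete_Partial_Order.chain (\<le>) {x \<in> F. col x = c})"
    by (rule dilworth)
  then obtain col where col: "col ` F \<subseteq> {..<k - 1}"
    "\<And>c. Complete_Partial_Order.chain (\<le>) {x \<in> F. col x = c}"
    by auto
  define C where "C = insert (grid_bot n) (insert (grid_top n t) {x \<in> F. col x = 0})"
  have bounds: "grid_bot n \<in> hypergrid n t" "grid_top n t \<in> hypergrid n t"
    using assms(2) by (auto intro: grid_bot_in_hypergrid grid_top_in_hypergrid)
  have ends: "grid_bot n \<in> C" "grid_top n t \<in> C" unfolding C_def by simp_all
  have "C \<subseteq> hypergrid n t" using F(1) bounds unfolding C_def by auto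
  moreover have "Complete_Partial_Order.chain (\<le>) C"
  proof -
    have "grid_bot n \<le> x" "x \<le> grid_top n t" if "x \<in> C" for x
      using that \<open>C \<subseteq> hypergrid n t\<close> grid_bot_le le_grid_top by blast+
    then show ?thesis
      using col(2)[of 0] bounds unfolding C_def chain_def by auto
  qed
  ultimately have "r \<in> grid_rank n ` F" if r: "r \<in> {n..n * t}" for r
  proof -
    obtain g where g: "g \<in> hypergrid n t" "grid_rank n g = r" "\<And>x. x \<in> C \<Longrightarrow> x \<le> g \<or> g \<le> x"
      by (rule comparable_at_every_rank[OF \<open>C \<subseteq> hypergrid n t\<close>
            \<open>Complete_Partial_Order.chain (\<le>) C\<close> ends r]) blast
    have "g \<in> F"
      using antichain_saturated_contains_comparable[OF sat assms(1) col g(1)] g(3)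
      unfolding C_def by blast
    then show ?thesis using g(2) by blast
  qed
  then have "card {n..n * t} \<le> card (grid_rank n ` F)"
    using \<open>finite F\<close> by (intro card_mono) auto
  also have "\<dots> \<le> card F" using \<open>finite F\<close> by (rule card_image_le)
  finally have "n * t + 1 - n \<le> card F" by simp
  moreover have "n * (t - 1) = n * t - n" by (simp add: diff_mult_distrib2)
  moreover have "n \<le> n * t" using assms(2) by simp
  ultimately show ?thesis by linarith
qed

definition label :: "nat \<Rightarrow> nat \<Rightarrow> nat" where
  "label j = (\<lambda>i. if i = j then 2 else 1)"

(* The coordinates from k to n read t..t v 1..1. *)
definition staircase :: "nat \<Rightarrow> nat \<Rightarrow> nat \<Rightarrow> (nat \<Rightarrow> nat) \<Rightarrow> bool" where
  "staircase k n t x \<longleftrightarrow> (\<forall>i j. k \<le> i \<longrightarrow> i < j \<longrightarrow> j \<le> n \<longrightarrow> 1 < x j \<longrightarrow> x i = t)"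

definition stair_class :: "nat \<Rightarrow> nat \<Rightarrow> nat \<Rightarrow> nat \<Rightarrow> (nat \<Rightarrow> nat) set" where
  "stair_class k n t j =
     {x \<in> hypergrid n t. (\<forall>i\<in>{1..<k}. x i = label j i) \<and> staircase k n t x}"

definition flat :: "nat \<Rightarrow> nat \<Rightarrow> nat \<Rightarrow> nat \<Rightarrow> (nat \<Rightarrow> nat) set" where
  "flat k n t v = PiE {1..n} (\<lambda>i. if i < k then {1..t} else {v})"

lemma staircase_suffixes_comparable:
  assumes "x \<in> hypergrid n t" "y \<in> hypergrid n t" "staircase k n t x" "staircase k n t y"
    and "1 \<le> k"
  shows "(\<forall>i\<in>{k..n}. x i \<le> y i) \<or> (\<forall>i\<in>{k..n}. y i \<le> x i)"
proof (rule ccontr)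
  assume "\<not> ?thesis"
  then obtain i j where i: "i \<in> {k..n}" "y i < x i" and j: "j \<in> {k..n}" "x j < y j"
    by (auto simp: not_le)
  have range: "x m \<le> t" "y m \<le> t" "1 \<le> x m" "1 \<le> y m" if "m \<in> {k..n}" for m
    using assms(1,2,5) that unfolding hypergrid_iff by auto
  consider "i < j" | "j < i" using i j by fastforce
  then show False
  proof cases
    case 1
    then have "y i = t" using assms(4) i(1) j range[OF j(1)] unfolding staircase_def by auto
    then show False using i range[OF i(1)] by simp
  next
    case 2
    then have "x j = t" using assms(3) i range[OF i(1)] j(1) unfolding staircase_def by auto
    then show False using j range[OF j(1)] by simp
  qed
qed

lemma chain_stair_class:
  assumes "1 \<le> k"
  shows "Complete_Partial_Order.chain (\<le>) (stair_class k n t j)"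
proof (rule chainI)
  fix x y assume "x \<in> stair_class k n t j" "y \<in> stair_class k n t j"
  then have x: "x \<in> hypergrid n t" "\<forall>i\<in>{1..<k}. x i = label j i" "staircase k n t x"
    and y: "y \<in> hypergrid n t" "\<forall>i\<in>{1..<k}. y i = label j i" "staircase k n t y"
    unfolding stair_class_def by auto
  have outside: "x i = y i" if "i \<notin> {1..n}" for i
    using x(1) y(1) that unfolding hypergrid_iff by simp
  consider "\<forall>i\<in>{k..n}. x i \<le> y i" | "\<forall>i\<in>{k..n}. y i \<le> x i"
    using staircase_suffixes_comparable[OF x(1) y(1) x(3) y(3) assms] by blast
  then show "x \<le> y \<or> y \<le> x"
  proof cases
    case 1
    have "x i \<le> y i" for i
      using 1 x(2) y(2) outside[of i] by (cases "i < k"; cases "i \<in> {1..n}") auto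
    then show ?thesis by (simp add: le_fun_def)
  next
    case 2
    have "y i \<le> x i" for i
      using 2 x(2) y(2) outside[of i] by (cases "i < k"; cases "i \<in> {1..n}") auto
    then show ?thesis by (simp add: le_fun_def)
  qed
qed

definition stair_family :: "nat \<Rightarrow> nat \<Rightarrow> nat \<Rightarrow> (nat \<Rightarrow> nat) set" where
  "stair_family k n t = (\<Union>j\<in>{1..<k}. stair_class k n t j)"

lemma stair_family_subset: "stair_family k n t \<subseteq> hypergrid n t"
  unfolding stair_family_def stair_class_def by blast

lemma card_stair_family: "card (stair_family k n t) \<le> (k - 1) * (n * (t - 1) + 1)"
proof -
  have "card (stair_family k n t) \<le> (\<Sum>j\<in>{1..<k}. card (stair_class k n t j))"
    unfolding stair_family_def by (rule card_UN_le) simp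
  also have "\<dots> \<le> (\<Sum>j\<in>{1..<k}. n * (t - 1) + 1)"
  proof (rule sum_mono)
    fix j assume "j \<in> {1..<k}"
    then show "card (stair_class k n t j) \<le> n * (t - 1) + 1"
      using chain_stair_class[of k n t j] by (intro card_chain_hypergrid) (auto simp: stair_class_def)
  qed
  finally show ?thesis by simp
qed

lemma card_antichain_stair_family:
  assumes "A \<subseteq> stair_family k n t" "antichain A"
  shows "card A \<le> k - 1"
proof -
  have "card A \<le> card {1..<k}"
    using assms chain_stair_class unfolding stair_family_def
    by (intro card_antichain_le_chain_cover) auto
  then show ?thesis by simp
qed

lemma flat_subset:
  assumes "v \<in> {1..t}"
  shows "flat k n t v \<subseteq> hypergrid n t"
proof -
  have "(if i < k then {1..t} else {v}) \<subseteq> {1..t}" for i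
    using assms by auto
  then show ?thesis
    unfolding flat_def hypergrid_def by (rule PiE_mono)
qed

lemma card_flat:
  assumes "k \<le> n + 1"
  shows "card (flat k n t v) = t ^ (k - 1)"
proof -
  have "card (flat k n t v) = (\<Prod>i\<in>{1..n}. card (if i < k then {1..t} else {v}))"
    unfolding flat_def by (simp add: card_PiE)
  also have "\<dots> = (\<Prod>i\<in>{1..n}. if i < k then t else 1)"
    by (intro prod.cong) auto
  also have "\<dots> = (\<Prod>i\<in>{1..n} \<inter> {..<k}. t)"
    using prod.inter_restrict[of "{1..n}" "\<lambda>_. t" "{..<k}"] by simp
  also have "{1..n} \<inter> {..<k} = {1..<k}" using assms by auto
  finally show ?thesis by simp
qed

lemma flat_memI:
  "g \<in> hypergrid n t \<Longrightarrow> (\<And>i. i \<in> {k..n} \<Longrightarrow> g i = v) \<Longrightarrow> g \<in> flat k n t v"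
  unfolding flat_def hypergrid_iff PiE_iff extensional_def by auto

definition stair_point :: "nat \<Rightarrow> nat \<Rightarrow> nat \<Rightarrow> nat \<Rightarrow> nat \<Rightarrow> nat \<Rightarrow> nat" where
  "stair_point k n t j b =
     (\<lambda>i. if i \<in> {1..<k} then label j i else if i \<in> {k..n} then (if i \<le> b then t else 1)
          else undefined)"

lemma stair_point_mem:
  assumes "2 \<le> t" "k \<le> n" "j \<in> {1..<k}"
  shows "stair_point k n t j b \<in> stair_class k n t j"
proof -
  have "stair_point k n t j b \<in> hypergrid n t"
    using assms unfolding hypergrid_iff stair_point_def label_def by auto
  moreover have "staircase k n t (stair_point k n t j b)"
    unfolding staircase_def stair_point_def by auto
  ultimately show ?thesis
    unfolding stair_class_def stair_point_def by auto
qed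

lemma stair_point_leD:
  assumes "stair_point k n t j b \<le> g"
  shows "\<forall>i\<in>{1..<k}. label j i \<le> g i" "\<forall>i\<in>{k..n}. i \<le> b \<longrightarrow> t \<le> g i"
proof -
  have le: "stair_point k n t j b i \<le> g i" for i
    using assms by (rule le_funD)
  show "\<forall>i\<in>{1..<k}. label j i \<le> g i"
  proof
    fix i assume "i \<in> {1..<k}"
    then show "label j i \<le> g i" using le[of i] unfolding stair_point_def by simp
  qed
  show "\<forall>i\<in>{k..n}. i \<le> b \<longrightarrow> t \<le> g i"
  proof (intro ballI impI)
    fix i assume "i \<in> {k..n}" "i \<le> b"
    then show "t \<le> g i" using le[of i] unfolding stair_point_def by auto
  qed
qed

lemma le_stair_pointD:
  assumes "g \<le> stair_point k n t j b"
  shows "\<forall>i\<in>{1..<k}. g i \<le> label j i" "\<forall>i\<in>{k..n}. b < i \<longrightarrow> g i \<le> 1"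
proof -
  have le: "g i \<le> stair_point k n t j b i" for i
    using assms by (rule le_funD)
  show "\<forall>i\<in>{1..<k}. g i \<le> label j i"
  proof
    fix i assume "i \<in> {1..<k}"
    then show "g i \<le> label j i" using le[of i] unfolding stair_point_def by simp
  qed
  show "\<forall>i\<in>{k..n}. b < i \<longrightarrow> g i \<le> 1"
  proof (intro ballI impI)
    fix i assume "i \<in> {k..n}" "b < i"
    then show "g i \<le> 1" using le[of i] unfolding stair_point_def by auto
  qed
qed

lemma stair_witness_same_label:
  assumes "g \<in> hypergrid n t" "\<not> staircase k n t g" "1 \<le> k"
  shows "\<exists>b. \<not> stair_point k n t j b \<le> g \<and> \<not> g \<le> stair_point k n t j b"
proof -
  obtain i i' where ii: "k \<le> i" "i < i'" "i' \<le> n" "1 < g i'" "g i \<noteq> t"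
    using assms(2) unfolding staircase_def by blast
  have "i \<in> {k..n}" "i' \<in> {k..n}" using ii by auto
  have "\<not> stair_point k n t j i \<le> g"
  proof
    assume "stair_point k n t j i \<le> g"
    then have "t \<le> g i" using stair_point_leD(2) \<open>i \<in> {k..n}\<close> by blast
    moreover have "g i \<le> t" using assms(1,3) \<open>i \<in> {k..n}\<close> unfolding hypergrid_iff by auto
    ultimately show False using ii(5) by simp
  qed
  moreover have "\<not> g \<le> stair_point k n t j i"
  proof
    assume "g \<le> stair_point k n t j i"
    then have "g i' \<le> 1" using le_stair_pointD(2) \<open>i' \<in> {k..n}\<close> ii(2) by blast
    then show False using ii(4) by simp
  qed
  ultimately show ?thesis by blast
qed

lemma stair_witness:
  assumes t: "2 \<le> t" and k: "k \<le> n" and j: "j \<in> {1..<k}"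
    and g: "g \<in> hypergrid n t" "g \<notin> stair_class k n t j"
      "g \<notin> flat k n t 1" "g \<notin> flat k n t t"
  obtains s where "s \<in> stair_class k n t j" "\<not> s \<le> g" "\<not> g \<le> s"
proof -
  let ?s = "stair_point k n t j"
  have "1 \<le> k" using j by simp
  have g_range: "1 \<le> g i \<and> g i \<le> t" if "i \<in> {k..n}" for i
    using g(1) that \<open>1 \<le> k\<close> unfolding hypergrid_iff by auto
  have "\<exists>b. \<not> ?s b \<le> g \<and> \<not> g \<le> ?s b"
  proof (cases "\<forall>i\<in>{1..<k}. label j i \<le> g i")
    case False
    have "\<not> g \<le> ?s (k - 1)"
    proof
      assume "g \<le> ?s (k - 1)"
      then have "g i \<le> 1" if "i \<in> {k..n}" for i
        using le_stair_pointD(2)[OF \<open>g \<le> ?s (k - 1)\<close>] that \<open>1 \<le> k\<close> by auto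
      then have "g i = 1" if "i \<in> {k..n}" for i
        using g_range[OF that] that by (simp add: order.antisym)
      then show False using flat_memI[OF g(1)] g(3) by blast
    qed
    then show ?thesis using False stair_point_leD(1)[of k n t j "k - 1" g] by blast
  next
    case below: True
    show ?thesis
    proof (cases "\<forall>i\<in>{1..<k}. g i \<le> label j i")
      case False
      have "\<not> ?s n \<le> g"
      proof
        assume "?s n \<le> g"
        then have "t \<le> g i" if "i \<in> {k..n}" for i
          using stair_point_leD(2)[OF \<open>?s n \<le> g\<close>] that by auto
        then have "g i = t" if "i \<in> {k..n}" for i
          using g_range[OF that] that by (simp add: order.antisym)
        then show False using flat_memI[OF g(1)] g(4) by blast
      qed
      then show ?thesis using False le_stair_pointD(1)[of g k n t j n] by blast
    next
      case True
      then have "\<forall>i\<in>{1..<k}. g i = label j i" using below by (auto intro: order.antisym)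
      then have "\<not> staircase k n t g"
        using g(1,2) unfolding stair_class_def by blast
      then show ?thesis using stair_witness_same_label g(1) \<open>1 \<le> k\<close> by blast
    qed
  qed
  then show ?thesis
    using that stair_point_mem[OF t k j] by blast
qed

lemma stair_classes_incomparable:
  assumes "x \<in> stair_class k n t j" "y \<in> stair_class k n t j'" "j \<in> {1..<k}" "j \<noteq> j'"
  shows "\<not> x \<le> y"
proof
  assume "x \<le> y"
  then have "x j \<le> y j" by (rule le_funD)
  moreover have "x j = 2" "y j = 1"
    using assms unfolding stair_class_def label_def by auto
  ultimately show False by simp
qed

lemma stair_family_saturating:
  assumes t: "2 \<le> t" and k: "2 \<le> k" "k \<le> n"
    and g: "g \<in> hypergrid n t" "g \<notin> stair_family k n t \<union> flat k n t 1 \<union> flat k n t t"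
  shows "\<exists>A\<subseteq>insert g (stair_family k n t). antichain A \<and> card A = k"
proof -
  have "\<forall>j\<in>{1..<k}. \<exists>s. s \<in> stair_class k n t j \<and> \<not> s \<le> g \<and> \<not> g \<le> s"
  proof
    fix j assume j: "j \<in> {1..<k}"
    have "g \<notin> stair_class k n t j" using g(2) j unfolding stair_family_def by blast
    then show "\<exists>s. s \<in> stair_class k n t j \<and> \<not> s \<le> g \<and> \<not> g \<le> s"
      using stair_witness[OF t k(2) j g(1)] g(2) by blast
  qed
  then obtain s where s: "\<And>j. j \<in> {1..<k} \<Longrightarrow> s j \<in> stair_class k n t j \<and> \<not> s j \<le> g \<and> \<not> g \<le> s j"
    by metis
  have distinct_labels: "\<not> s j \<le> s j'" if "j \<in> {1..<k}" "j' \<in> {1..<k}" "j \<noteq> j'" for j j'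
    using stair_classes_incomparable s that by blast
  define A where "A = insert g (s ` {1..<k})"
  have "antichain (s ` {1..<k})"
    unfolding antichain_def using distinct_labels by blast
  then have "antichain A"
    unfolding A_def using s by (intro antichain_insert) auto
  moreover have "A \<subseteq> insert g (stair_family k n t)"
    using s unfolding A_def stair_family_def by blast
  moreover have "card A = k"
  proof -
    have "g \<noteq> s j" if "j \<in> {1..<k}" for j using s[OF that] by auto
    then have "g \<notin> s ` {1..<k}" by (simp add: image_iff)
    moreover have "inj_on s {1..<k}" using distinct_labels by (intro inj_onI) (metis order.refl)
    ultimately show ?thesis using k unfolding A_def by (simp add: card_image)
  qed
  ultimately show ?thesis by blast
qed

theorem antichain_saturated_family_exists:
  assumes t: "2 \<le> t" and k: "2 \<le> k" "k \<le> n"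
  obtains G where "induced_saturated {1..k} antichain_le n t G"
    "card G \<le> (k - 1) * (n * (t - 1) + 1) + 2 * t ^ (k - 1)"
proof -
  define U where "U = stair_family k n t \<union> flat k n t 1 \<union> flat k n t t"
  have U: "U \<subseteq> hypergrid n t"
    using stair_family_subset flat_subset t unfolding U_def by auto
  have sub: "stair_family k n t \<subseteq> U" unfolding U_def by blast
  have "card A < k" if "A \<subseteq> stair_family k n t" "antichain A" for A
    using card_antichain_stair_family[OF that] k by simp
  then have "\<not> (\<exists>A\<subseteq>stair_family k n t. antichain A \<and> card A = k)"
    by (metis less_irrefl)
  then have free: "induced_free {1..k} antichain_le n (stair_family k n t)"
    unfolding induced_free_def induced_antichain_copy_iff[OF stair_family_subset] .
  have saturating: "\<not> induced_free {1..k} antichain_le n (insert g (stair_family k n t))"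
    if g: "g \<in> hypergrid n t - U" for g
  proof -
    have grid: "insert g (stair_family k n t) \<subseteq> hypergrid n t"
      using g stair_family_subset by blast
    have "\<exists>A\<subseteq>insert g (stair_family k n t). antichain A \<and> card A = k"
      using g unfolding U_def by (intro stair_family_saturating[OF t k]) auto
    then show ?thesis
      unfolding induced_free_def induced_antichain_copy_iff[OF grid] by simp
  qed
  obtain G where G: "stair_family k n t \<subseteq> G" "G \<subseteq> U" "induced_saturated {1..k} antichain_le n t G"
    by (rule saturated_extension[OF sub U free saturating])
  have "card G \<le> card U"
    using G(2) finite_subset[OF U] by (intro card_mono) auto
  also have "\<dots> \<le> card (stair_family k n t) + card (flat k n t 1) + card (flat k n t t)"
    using card_Un_le[of "stair_family k n t \<union> flat k n t 1" "flat k n t t"]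
      card_Un_le[of "stair_family k n t" "flat k n t 1"] unfolding U_def by linarith
  also have "\<dots> \<le> (k - 1) * (n * (t - 1) + 1) + 2 * t ^ (k - 1)"
    using card_stair_family[of k n t] card_flat[of k n t] k by simp
  finally show ?thesis using G(3) that by blast
qed

theorem sat_star_antichain_bounds:
  assumes k: "2 \<le> k" "k \<le> n" and t: "2 \<le> t"
  shows "n \<le> sat_star {1..k} antichain_le n t"
    and "sat_star {1..k} antichain_le n t \<le> ((k - 1) * t + 2 * t ^ (k - 1)) * n"
proof -
  obtain G where G: "induced_saturated {1..k} antichain_le n t G"
    "card G \<le> (k - 1) * (n * (t - 1) + 1) + 2 * t ^ (k - 1)"
    using antichain_saturated_family_exists[OF t k] by blast
  obtain H where H: "induced_saturated {1..k} antichain_le n t H"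
    "card H = sat_star {1..k} antichain_le n t"
    using sat_star_attained[OF G(1)] by blast
  have "n * (t - 1) + 1 \<le> card H"
    using card_antichain_saturated_ge[OF k(1) _ H(1)] t by simp
  moreover have "n \<le> n * (t - 1)"
  proof -
    have "1 \<le> t - 1" using t by linarith
    then have "n * 1 \<le> n * (t - 1)" by (rule mult_le_mono2)
    then show ?thesis by simp
  qed
  ultimately show "n \<le> sat_star {1..k} antichain_le n t" using H(2) by linarith
  have "1 \<le> n" using k by simp
  moreover have "n * (t - 1) = n * t - n" by (simp add: diff_mult_distrib2)
  moreover have "n \<le> n * t" using t by simp
  ultimately have "n * (t - 1) + 1 \<le> n * t" by linarith
  then have "(k - 1) * (n * (t - 1) + 1) \<le> (k - 1) * (n * t)" by (rule mult_le_mono2)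
  moreover have "2 * t ^ (k - 1) \<le> 2 * t ^ (k - 1) * n" using \<open>1 \<le> n\<close> by simp
  moreover have "((k - 1) * t + 2 * t ^ (k - 1)) * n = (k - 1) * (n * t) + 2 * t ^ (k - 1) * n"
    by (simp add: algebra_simps)
  ultimately show "sat_star {1..k} antichain_le n t \<le> ((k - 1) * t + 2 * t ^ (k - 1)) * n"
    using sat_star_le[OF G(1)] G(2) by linarith
qed

lemma bigtheta_of_linear_bounds:
  fixes f :: "nat \<Rightarrow> nat"
  assumes "\<forall>\<^sub>F n in at_top. n \<le> f n \<and> f n \<le> c * n"
  shows "(\<lambda>n. real (f n)) \<in> \<Theta>(\<lambda>n. real n)"
proof (rule bigthetaI)
  have "\<forall>\<^sub>F n in at_top. real (f n) \<le> real c * real n"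
    using assms by eventually_elim (metis of_nat_le_iff of_nat_mult)
  then show "(\<lambda>n. real (f n)) \<in> O(\<lambda>n. real n)"
    by (intro bigoI[of _ "real c"]) auto
  have "\<forall>\<^sub>F n in at_top. real n \<le> real (f n)"
    using assms by eventually_elim simp
  then show "(\<lambda>n. real (f n)) \<in> \<Omega>(\<lambda>n. real n)"
    by (intro landau_omega.big_mono) auto
qed

theorem mainTheorem4:
  fixes k t :: nat
  assumes "k \<ge> 2" and "t \<ge> 2"
  shows "(\<forall>n\<ge>1. embeds_in_grid {1..k} chain_le n t \<longrightarrow>
            sat_star {1..k} chain_le n t \<le> 2 ^ (k - 2))
       \<and> (\<lambda>n. real (sat_star {1..k} antichain_le n t)) \<in> \<Theta>(\<lambda>n. real n)"
proof (intro conjI allI impI)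
  fix n :: nat assume "1 \<le> n" "embeds_in_grid {1..k} chain_le n t"
  then show "sat_star {1..k} chain_le n t \<le> 2 ^ (k - 2)"
    using sat_star_chain_le assms by blast
next
  have "\<forall>\<^sub>F n in at_top. n \<le> sat_star {1..k} antichain_le n t \<and>
      sat_star {1..k} antichain_le n t \<le> ((k - 1) * t + 2 * t ^ (k - 1)) * n"
    using eventually_ge_at_top[of k]
    by eventually_elim (use sat_star_antichain_bounds assms in blast)
  then show "(\<lambda>n. real (sat_star {1..k} antichain_le n t)) \<in> \<Theta>(\<lambda>n. real n)"
    by (rule bigtheta_of_linear_bounds)
qed

end
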